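(* Let $\Phi:\mathbb{R}^2\to[0,\infty[$ be measurable. (a) (Non-relativistic case.) Let $U\in C^1(]0,\infty[)$ satisfy $$U'(r)=\frac{4\pi}{r^2}\int_0^r s^2\rho(s)\,ds,\qquad r>0,$$ where $$\rho(r)=\rho(x)=\int_{\mathbb{R}^3} f(x,v)\,dv,\qquad f(x,v)=\Phi\big(E(x,v),L(x,v)\big),$$ with $E(x,v)=\tfrac12|v|^2+U(|x|)$, $L(x,v)=|x\times v|^2$ and $r=|x|$. Assume that the mass $M=\int_{\mathbb{R}^3}\rho(x)\,dx$ is finite. Then $U_\infty=\lim_{r\to\infty}U(r)$ exists and is finite, and $\Phi(E,L)=0$ for almost every $(E,L)$ with $E>U_\infty$ and $L>0$. (b) (Relativistic case.) Let $\lambda,\mu\in C^1(]0,\infty[)$ satisfy, for $r>0$, $$e^{-2\lambda}(2r\lambda'-1)+1=8\pi r^2\rho,\qquad e^{-2\lambda}(2r\mu'+1)-1=8\pi r^2 p,$$ where $$\rho(r)=\int_{\mathbb{R}^3}\sqrt{1+|v|^2}\,f(x,v)\,dv,\qquad p(r)=\int_{\mathbb{R}^3}\Big(\frac{x\cdot v}{r}\Big)^2 f(x,v)\,\frac{dv}{\sqrt{1+|v|^2}},$$ with $f(x,v)=\Phi(E(x,v),L(x,v))$, $E(x,v)=e^{\mu(|x|)}\sqrt{1+|v|^2}$, $L(x,v)=|x\times v|^2$ and $r=|x|$. Assume moreover the regular-center condition, in the form $e^{-2\lambda(r)}=1-2m(r)/r$ for all $r>0$, where $m(r)=4\pi\int_0^r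 s^2\rho(s)\,ds$. Assume that the ADM mass $M=\int_{\mathbb{R}^3}\rho(x)\,dx$ is finite. Then $\mu_\infty=\lim_{r\to\infty}\mu(r)$ exists and is finite, and $\Phi(E,L)=0$ for almost every $(E,L)$ with $E>e^{\mu_\infty}$ and $L>0$.
   Context: Here $x,v\in\mathbb{R}^3$, $\cdot$ is the Euclidean inner product and $\times$ the cross product. The functions $\rho$ and $p$ depend only on $r=|x|$ because of spherical symmetry. *)

theory Defs
  imports "HOL-Analysis.Analysis"
begin

definition angmom :: "real^3 \<Rightarrow> real^3 \<Rightarrow> real" where
  "angmom x v = (norm (cross3 x v))^2"

text \<open>The point (r,0,0) of R^3, used to evaluate spherically symmetric functions at radius r.\<close>
definition radpt :: "real \<Rightarrow> real^3" where
  "radpt r = vector [r, 0, 0]"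

definition nr_f :: "(real \<times> real \<Rightarrow> real) \<Rightarrow> (real \<Rightarrow> real) \<Rightarrow> real^3 \<Rightarrow> real^3 \<Rightarrow> real" where
  "nr_f Phi U x v = Phi (1/2 * (norm v)^2 + U (norm x), angmom x v)"

definition nr_rho :: "(real \<times> real \<Rightarrow> real) \<Rightarrow> (real \<Rightarrow> real) \<Rightarrow> real^3 \<Rightarrow> ennreal" where
  "nr_rho Phi U x = (\<integral>\<^sup>+ v. ennreal (nr_f Phi U x v) \<partial>lborel)"

definition rel_f :: "(real \<times> real \<Rightarrow> real) \<Rightarrow> (real \<Rightarrow> real) \<Rightarrow> real^3 \<Rightarrow> real^3 \<Rightarrow> real" where
  "rel_f Phi mu x v = Phi (exp (mu (norm x)) * sqrt (1 + (norm v)^2), angmom x v)"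

definition rel_rho :: "(real \<times> real \<Rightarrow> real) \<Rightarrow> (real \<Rightarrow> real) \<Rightarrow> real^3 \<Rightarrow> ennreal" where
  "rel_rho Phi mu x = (\<integral>\<^sup>+ v. ennreal (sqrt (1 + (norm v)^2) * rel_f Phi mu x v) \<partial>lborel)"

definition rel_p :: "(real \<times> real \<Rightarrow> real) \<Rightarrow> (real \<Rightarrow> real) \<Rightarrow> real^3 \<Rightarrow> ennreal" where
  "rel_p Phi mu x = (\<integral>\<^sup>+ v. ennreal (((x \<bullet> v) / norm x)^2 * rel_f Phi mu x v
                                         / sqrt (1 + (norm v)^2)) \<partial>lborel)"

end

theory Submission
  imports Defs
begin

text \<open>
  In both cases the density is \<open>\<rho>(x) = \<integral> G(|x|, |v|\<^sup>2, L(x, v)) dv\<close> for a phase-space density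
  \<open>G\<close> built from \<open>\<Phi>\<close>. At the point \<open>(s, 0, 0)\<close> write \<open>v = (a, b, c)\<close> and trade the transversal
  velocity \<open>(b, c)\<close> for \<open>L = s\<^sup>2 (b\<^sup>2 + c\<^sup>2)\<close> and the radial velocity \<open>a\<close> for the energy \<open>E\<close>:
  this gives \<open>s\<^sup>2 \<rho>(s) \<ge> \<integral>\<integral>\<^bsub>E > B(s, L)\<^esub> \<Phi>(E, L) w(E) dE dL\<close> for \<open>s \<ge> 1\<close>, where \<open>B(s, L)\<close> is
  the least energy of a particle at radius \<open>s\<close> with angular momentum \<open>L\<close> and \<open>w > 0\<close> is an
  explicit weight. Integrating over \<open>s \<ge> 1\<close> and exchanging the integrals, finite mass yields
  \<open>\<integral>\<integral> \<Phi>(E, L) w(E) |{s \<ge> 1. B(s, L) < E}| dE dL < \<infinity>\<close>. Since \<open>B(s, L)\<close> tends to \<open>U\<^sub>\<infinity>\<close>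
  (resp. \<open>e\<^bsup>\<mu>\<^sub>\<infinity>\<^esup>\<close>) as \<open>s \<rightarrow> \<infinity>\<close>, the set of radii has infinite measure when \<open>E\<close> exceeds this
  limit and \<open>L > 0\<close>, so \<open>\<Phi>\<close> must vanish there. The limits exist because \<open>U\<close> and \<open>\<mu>\<close> are
  increasing and bounded: \<open>U' \<le> 4\<pi>M/r\<^sup>2\<close>, and in the relativistic case \<open>\<mu>' - \<lambda>' \<le> 4M/r\<^sup>2\<close>
  far out, where \<open>\<lambda>\<close> is bounded.
\<close>

section \<open>Integration over \<open>\<real>\<^sup>3\<close>\<close>

lemma lborel_distr_orthogonal_transformation:
  fixes T :: "real^'n::{finite,wellorder} \<Rightarrow> real^'n::{finite,wellorder}"
  assumes T: "orthogonal_transformation T"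
  shows "distr lborel borel T = lborel"
proof (rule lborel_eqI[symmetric])
  have T_meas[measurable]: "T \<in> borel_measurable borel"
    using T by (intro borel_measurable_continuous_onI linear_continuous_on)
      (simp add: orthogonal_transformation_linear linear_linear)
  obtain T' where T': "orthogonal_transformation T'" "\<And>x. T' (T x) = x" "\<And>x. T (T' x) = x"
    by (metis T orthogonal_transformation_inv orthogonal_transformation_bij bij_inv_eq_iff)
  fix l u :: "real^'n::{finite,wellorder}"
  assume "\<And>b. b \<in> Basis \<Longrightarrow> l \<bullet> b \<le> u \<bullet> b"
  then have box_eq: "emeasure lborel (box l u) = (\<Prod>b\<in>Basis. (u - l) \<bullet> b)"
    by simp
  have preimage: "T -` box l u = T' ` box l u"
    using T' by (auto simp: image_iff) metis
  then have "T' ` box l u \<in> sets borel"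
    by (metis T_meas measurable_sets_borel borel_open open_box)
  then have "emeasure (distr lborel borel T) (box l u) = emeasure lebesgue (T' ` box l u)"
    by (simp add: emeasure_distr preimage emeasure_completion)
  also have "\<dots> = measure lebesgue (T' ` box l u)"
    using measurable_orthogonal_image[OF T'(1), of "box l u"] by (simp add: emeasure_eq_measure2)
  also have "\<dots> = measure lebesgue (box l u)"
    using measure_orthogonal_image[OF T'(1), of "box l u"] by simp
  also have "\<dots> = emeasure lborel (box l u)"
    by (simp add: emeasure_eq_measure2 emeasure_completion measure_completion del: emeasure_lborel_box_eq)
  finally show "emeasure (distr lborel borel T) (box l u) = (\<Prod>b\<in>Basis. (u - l) \<bullet> b)"
    by (simp add: box_eq)
qed simp

lemma angmom_measurable[measurable]:
  fixes f g :: "'a \<Rightarrow> real^3"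
  assumes [measurable]: "f \<in> borel_measurable M" "g \<in> borel_measurable M"
  shows "(\<lambda>p. angmom (f p) (g p)) \<in> borel_measurable M"
proof -
  have "continuous_on UNIV (\<lambda>x::(real^3) \<times> (real^3). (norm (cross3 (fst x) (snd x)))^2)"
    by (intro continuous_intros continuous_on_cross)
  from borel_measurable_continuous_Pair[OF assms this] show ?thesis
    by (simp add: angmom_def)
qed

lemma angmom_orthogonal_transformation:
  assumes "orthogonal_transformation T"
  shows "angmom (T x) (T v) = angmom x v"
  using assms by (simp add: angmom_def cross_orthogonal_transformation orthogonal_transformation_norm)

lemma radpt_eq_axis: "radpt r = r *\<^sub>R axis 1 1"
  by (simp add: radpt_def vec_eq_iff forall_3 axis_def)

lemma norm_radpt[simp]: "norm (radpt r) = \<bar>r\<bar>"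
  by (simp add: radpt_eq_axis)

lemma radpt_eq_0_iff[simp]: "radpt r = 0 \<longleftrightarrow> r = 0"
  by (metis abs_eq_0 norm_eq_zero norm_radpt)

lemma radpt_measurable[measurable]:
  "f \<in> borel_measurable M \<Longrightarrow> (\<lambda>x. radpt (f x)) \<in> borel_measurable M"
  unfolding radpt_eq_axis by (intro borel_measurable_scaleR) auto

lemma nn_integral_angmom_rotate:
  fixes F :: "real \<Rightarrow> real \<Rightarrow> ennreal"
  assumes [measurable]: "case_prod F \<in> borel_measurable borel"
  shows "(\<integral>\<^sup>+v. F (norm v) (angmom x v) \<partial>lborel)
       = (\<integral>\<^sup>+v. F (norm v) (angmom (radpt (norm x)) v) \<partial>lborel)"
proof -
  obtain T :: "real^3 \<Rightarrow> real^3"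
    where T: "orthogonal_transformation T" and Tx: "T (norm x *\<^sub>R axis 1 1) = x"
    by (rule rotation_rightward_line)
  have [measurable]: "T \<in> borel_measurable borel"
    using T by (intro borel_measurable_continuous_onI linear_continuous_on)
      (simp add: orthogonal_transformation_linear linear_linear)
  have "(\<integral>\<^sup>+v. F (norm v) (angmom x v) \<partial>lborel)
      = (\<integral>\<^sup>+v. F (norm v) (angmom x v) \<partial>distr lborel borel T)"
    by (simp add: lborel_distr_orthogonal_transformation[OF T])
  also have "\<dots> = (\<integral>\<^sup>+v. F (norm (T v)) (angmom x (T v)) \<partial>lborel)"
  proof -
    have "(\<lambda>v. case_prod F (norm v, angmom x v)) \<in> borel_measurable borel"
      by measurable
    then show ?thesis by (subst nn_integral_distr) auto
  qed
  also have "\<dots> = (\<integral>\<^sup>+v. F (norm v) (angmom (radpt (norm x)) v) \<partial>lborel)"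
    using T angmom_orthogonal_transformation[OF T, of "norm x *\<^sub>R axis 1 1"]
    by (simp add: Tx orthogonal_transformation_norm radpt_eq_axis)
  finally show ?thesis .
qed

lemma emeasure_distr_norm_atMost:
  "emeasure (distr (lborel :: 'a::euclidean_space measure) borel norm) {..b}
    = ennreal (unit_ball_vol DIM('a) * max b 0 ^ DIM('a))"
proof (cases "b \<ge> 0")
  case True
  then have "norm -` {..b} = (cball 0 b :: 'a set)" by auto
  then show ?thesis using True by (simp add: emeasure_distr emeasure_cball)
next
  case False
  then have "norm -` {..b} = ({} :: 'a set)" by (auto intro: order.trans[OF norm_ge_zero])
  then show ?thesis using False by (simp add: emeasure_distr)
qed

lemma distr_norm_lborel:
  "distr (lborel :: 'a::euclidean_space measure) borel norm =
     density lborel (\<lambda>s. ennreal (DIM('a) * unit_ball_vol DIM('a) * s ^ (DIM('a) - 1)) * indicator {0..} s)"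
  (is "_ = density lborel ?f")
proof (rule measure_eqI_generator_eq[where E="range atMost" and \<Omega>=UNIV and A="\<lambda>i. {..real i}"])
  let ?n = "DIM('a)" and ?V = "unit_ball_vol DIM('a)"
  note ball_vol = emeasure_distr_norm_atMost[where 'a='a]
  have density_vol: "emeasure (density lborel ?f) {..b} = ennreal (?V * max b 0 ^ ?n)" for b :: real
  proof (cases "b \<ge> 0")
    case True
    have "((\<lambda>s. ?V * s ^ ?n) has_real_derivative ?n * ?V * s ^ (?n - 1)) (at s)" for s :: real
      by (auto intro!: derivative_eq_intros)
    then have "(\<integral>\<^sup>+s. ennreal (?n * ?V * s ^ (?n - 1)) * indicator {0..b} s \<partial>lborel) = ?V * b ^ ?n"
      using True by (subst nn_integral_FTC_Icc) auto
    moreover have "emeasure (density lborel ?f) {..b}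
        = (\<integral>\<^sup>+s. ennreal (?n * ?V * s ^ (?n - 1)) * indicator {0..b} s \<partial>lborel)"
      by (simp add: emeasure_density, intro nn_integral_cong) (auto split: split_indicator)
    ultimately show ?thesis using True by simp
  next
    case False
    then have "(\<integral>\<^sup>+s. ?f s * indicator {..b} s \<partial>lborel) = (\<integral>\<^sup>+s. 0 \<partial>(lborel :: real measure))"
      by (intro nn_integral_cong) (auto split: split_indicator)
    then show ?thesis using False by (simp add: emeasure_density)
  qed
  show "emeasure (distr (lborel :: 'a measure) borel norm) X = emeasure (density lborel ?f) X"
    if "X \<in> range atMost" for X
  proof -
    from that obtain b where "X = {..b}" by blast
    then show ?thesis by (simp only: ball_vol density_vol)
  qed
  show "emeasure (distr (lborel :: 'a measure) borel norm) {..real i} \<noteq> \<infinity>" for i :: nat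
    by (simp add: ball_vol)
qed (auto simp: Int_stable_def borel_eq_atMost intro: real_arch_simple)

lemma nn_integral_norm_real3:
  fixes g :: "real \<Rightarrow> ennreal"
  assumes [measurable]: "g \<in> borel_measurable borel"
  shows "(\<integral>\<^sup>+x. g (norm (x :: real^3)) \<partial>lborel) = ennreal (4 * pi) * (\<integral>\<^sup>+s\<in>{0..}. ennreal (s\<^sup>2) * g s \<partial>lborel)"
proof -
  have "unit_ball_vol 3 = 4/3 * pi"
    by (simp add: eval_unit_ball_vol)
  then have density: "ennreal (DIM(real^3) * unit_ball_vol DIM(real^3) * s ^ (DIM(real^3) - 1)) = ennreal (4 * pi) * ennreal (s\<^sup>2)"
    for s :: real
    by (simp add: ennreal_mult[symmetric] numeral_eq_Suc)
  have "(\<integral>\<^sup>+x. g (norm (x :: real^3)) \<partial>lborel) = (\<integral>\<^sup>+s. g s \<partial>distr (lborel :: (real^3) measure) borel norm)"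
    by (subst nn_integral_distr) auto
  also have "\<dots> = (\<integral>\<^sup>+s. ennreal (4 * pi) * (ennreal (s\<^sup>2) * g s * indicator {0..} s) \<partial>lborel)"
    unfolding distr_norm_lborel density by (subst nn_integral_density) (auto simp: ac_simps)
  also have "\<dots> = ennreal (4 * pi) * (\<integral>\<^sup>+s\<in>{0..}. ennreal (s\<^sup>2) * g s \<partial>lborel)"
    by (subst nn_integral_cmult) auto
  finally show ?thesis .
qed

lemma vector3_eq_axis: "vector [a, b, c] = a *\<^sub>R axis 1 1 + b *\<^sub>R axis 2 1 + (c *\<^sub>R axis 3 1 :: real^3)"
  by (simp add: vec_eq_iff forall_3 axis_def)

lemma vector3_measurable[measurable]:
  assumes [measurable]: "f \<in> borel_measurable M" "g \<in> borel_measurable M" "h \<in> borel_measurable M"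
  shows "(\<lambda>x. vector [f x, g x, h x] :: real^3) \<in> borel_measurable M"
  unfolding vector3_eq_axis by measurable

lemma norm_vector3_sq: "(norm (vector [a, b, c] :: real^3))\<^sup>2 = a\<^sup>2 + b\<^sup>2 + c\<^sup>2"
  unfolding power2_norm_eq_inner by (simp add: inner_vec_def sum_3 power2_eq_square)

lemma angmom_radpt_vector3: "angmom (radpt s) (vector [a, b, c]) = s\<^sup>2 * (b\<^sup>2 + c\<^sup>2)"
  unfolding angmom_def cross3_def radpt_def norm_vector3_sq
  by (simp add: power2_eq_square algebra_simps)

lemma prod_Basis_real3: "(\<Prod>b\<in>(Basis :: (real^3) set). f b) = f (axis 1 1) * f (axis 2 1) * f (axis 3 1)"
proof -
  have Basis_eq: "(Basis :: (real^3) set) = (\<lambda>i. axis i 1) ` UNIV"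
    by (auto simp: Basis_vec_def)
  have "inj (\<lambda>i::3. axis i (1::real))"
    by (auto intro!: injI simp: axis_eq_axis)
  then have "(\<Prod>b\<in>(Basis :: (real^3) set). f b) = (\<Prod>i\<in>UNIV. f (axis i 1))"
    unfolding Basis_eq by (simp add: prod.reindex)
  also have "\<dots> = f (axis 1 1) * f (axis 2 1) * f (axis 3 1)"
    unfolding UNIV_3 by (simp add: mult.assoc)
  finally show ?thesis .
qed

lemma distr_lborel_triple_vector3:
  "distr (lborel \<Otimes>\<^sub>M (lborel \<Otimes>\<^sub>M lborel)) borel (\<lambda>(a, b, c). vector [a, b, c]) = (lborel :: (real^3) measure)"
proof (rule lborel_eqI[symmetric])
  fix l u :: "real^3"
  assume lu: "\<And>b. b \<in> Basis \<Longrightarrow> l \<bullet> b \<le> u \<bullet> b"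
  have le: "l$i \<le> u$i" for i
  proof -
    have "axis i 1 \<in> (Basis :: (real^3) set)"
      by (auto simp: Basis_vec_def)
    from lu[OF this] show ?thesis
      by (simp add: inner_axis)
  qed
  have preimage: "(\<lambda>(a, b, c). vector [a, b, c]) -` box l u = {l$1<..<u$1} \<times> {l$2<..<u$2} \<times> {l$3<..<u$3}"
    by (auto simp: mem_box_cart forall_3)
  have "emeasure (lborel \<Otimes>\<^sub>M (lborel \<Otimes>\<^sub>M lborel)) ({l$1<..<u$1} \<times> {l$2<..<u$2} \<times> {l$3<..<u$3})
      = emeasure (lborel \<Otimes>\<^sub>M (lborel :: (real \<times> real) measure)) ({l$1<..<u$1} \<times> ({l$2<..<u$2} \<times> {l$3<..<u$3}))"
    by (simp add: lborel_prod)
  also have "\<dots> = emeasure lborel {l$1<..<u$1} * emeasure (lborel :: (real \<times> real) measure) ({l$2<..<u$2} \<times> {l$3<..<u$3})"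
    by (rule lborel.emeasure_pair_measure_Times) (auto intro!: borel_open open_Times)
  also have "emeasure (lborel :: (real \<times> real) measure) ({l$2<..<u$2} \<times> {l$3<..<u$3})
      = emeasure lborel {l$2<..<u$2} * emeasure lborel {l$3<..<u$3}"
    by (subst lborel_prod[symmetric], rule lborel.emeasure_pair_measure_Times) auto
  finally have "emeasure (lborel \<Otimes>\<^sub>M (lborel \<Otimes>\<^sub>M lborel)) ({l$1<..<u$1} \<times> {l$2<..<u$2} \<times> {l$3<..<u$3})
      = emeasure lborel {l$1<..<u$1} * (emeasure lborel {l$2<..<u$2} * emeasure lborel {l$3<..<u$3})" .
  then show "emeasure (distr (lborel \<Otimes>\<^sub>M (lborel \<Otimes>\<^sub>M lborel)) borel (\<lambda>(a, b, c). vector [a, b, c])) (box l u)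
      = (\<Prod>b\<in>Basis. (u - l) \<bullet> b)"
    using le
    by (simp add: emeasure_distr preimage space_pair_measure prod_Basis_real3
        cart_eq_inner_axis[symmetric] ennreal_mult mult.assoc)
qed simp

lemma nn_integral_lborel_real3:
  fixes h :: "real^3 \<Rightarrow> ennreal"
  assumes [measurable]: "h \<in> borel_measurable borel"
  shows "(\<integral>\<^sup>+v. h v \<partial>lborel) = (\<integral>\<^sup>+a. \<integral>\<^sup>+b. \<integral>\<^sup>+c. h (vector [a, b, c]) \<partial>lborel \<partial>lborel \<partial>lborel)"
proof -
  have "(\<integral>\<^sup>+v. h v \<partial>lborel)
      = (\<integral>\<^sup>+p. h (case p of (a, b, c) \<Rightarrow> vector [a, b, c]) \<partial>(lborel \<Otimes>\<^sub>M (lborel \<Otimes>\<^sub>M lborel)))"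
    by (subst distr_lborel_triple_vector3[symmetric], subst nn_integral_distr) auto
  also have "\<dots> = (\<integral>\<^sup>+p. h (case p of (a, b, c) \<Rightarrow> vector [a, b, c]) \<partial>(lborel \<Otimes>\<^sub>M (lborel :: (real \<times> real) measure)))"
    by (simp add: lborel_prod)
  also have "\<dots> = (\<integral>\<^sup>+a. \<integral>\<^sup>+q. h (case q of (b, c) \<Rightarrow> vector [a, b, c]) \<partial>(lborel :: (real \<times> real) measure) \<partial>lborel)"
  proof (subst lborel.nn_integral_fst[symmetric])
    have "(\<lambda>p. h (case p of (a, b, c) \<Rightarrow> vector [a, b, c])) \<in> borel_measurable (lborel \<Otimes>\<^sub>M (lborel \<Otimes>\<^sub>M lborel))"
      by measurable
    then show "(\<lambda>p. h (case p of (a, b, c) \<Rightarrow> vector [a, b, c])) \<in> borel_measurable (lborel \<Otimes>\<^sub>M (lborel :: (real \<times> real) measure))"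
      by (simp add: lborel_prod)
  qed auto
  also have "\<dots> = (\<integral>\<^sup>+a. \<integral>\<^sup>+b. \<integral>\<^sup>+c. h (vector [a, b, c]) \<partial>lborel \<partial>lborel \<partial>lborel)"
    by (intro nn_integral_cong, subst lborel_prod[symmetric], subst lborel.nn_integral_fst[symmetric]) auto
  finally show ?thesis .
qed

section \<open>Integrals over the line and the plane\<close>

lemma emeasure_lborel_atLeast: "emeasure lborel {a::real..} = \<infinity>"
proof (rule ccontr)
  assume "emeasure lborel {a..} \<noteq> \<infinity>"
  then obtain r where r: "emeasure lborel {a..} = ennreal r" "r \<ge> 0"
    by (cases "emeasure lborel {a..}") auto
  obtain n :: nat where n: "r < real n"
    using reals_Archimedean2 by blast
  have "ennreal (real n) = emeasure lborel {a..a + real n}" by simp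
  also have "\<dots> \<le> emeasure lborel {a..}" by (intro emeasure_mono) auto
  finally show False
    using n r by simp
qed

lemma emeasure_lborel_square_less: "emeasure lborel {b::real. b\<^sup>2 < L} = ennreal (2 * sqrt L)"
proof -
  have set_eq: "{b::real. b\<^sup>2 < L} = {- sqrt L<..<sqrt L}"
  proof (rule set_eqI)
    fix b :: real
    have "b\<^sup>2 < L \<longleftrightarrow> sqrt (b\<^sup>2) < sqrt L"
      by (rule real_sqrt_less_iff[symmetric])
    then show "b \<in> {b. b\<^sup>2 < L} \<longleftrightarrow> b \<in> {- sqrt L<..<sqrt L}"
      by (auto simp: abs_less_iff)
  qed
  show ?thesis
  proof (cases "L > 0")
    case True
    then show ?thesis by (simp add: set_eq)
  next
    case False
    then have "sqrt L \<le> 0" by simp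
    moreover from this have "{- sqrt L<..<sqrt L} = {}" by auto
    ultimately show ?thesis by (simp add: set_eq ennreal_neg)
  qed
qed

lemma pred_mem_greaterThan[measurable (raw)]:
  fixes f g :: "'a \<Rightarrow> real"
  assumes [measurable]: "f \<in> borel_measurable M" "g \<in> borel_measurable M"
  shows "Measurable.pred M (\<lambda>x. f x \<in> {g x<..})"
  by simp

lemma SUP_indicator_atLeastAtMost:
  fixes c :: ennreal and h :: "nat \<Rightarrow> real"
  assumes "incseq h" and "\<And>y. \<exists>n. y \<le> h n"
  shows "(SUP n. c * indicator {a..h n} y) = c * indicator {a..} y"
proof (cases "a \<le> y")
  case True
  obtain n where "y \<le> h n" using assms(2) by blast
  then have "c = c * indicator {a..h n} y" using True by simp
  also have "\<dots> \<le> (SUP n. c * indicator {a..h n} y)" by (rule SUP_upper) auto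
  finally show ?thesis
    using True by (intro antisym SUP_least) (auto split: split_indicator)
qed simp

lemma nn_integral_atLeast_SUP:
  fixes f :: "real \<Rightarrow> ennreal" and b :: "nat \<Rightarrow> real"
  assumes [measurable]: "f \<in> borel_measurable borel" and b: "incseq b" "filterlim b at_top sequentially"
  shows "(\<integral>\<^sup>+x\<in>{a..}. f x \<partial>lborel) = (SUP n. \<integral>\<^sup>+x\<in>{a..b n}. f x \<partial>lborel)"
proof -
  have b_unbounded: "\<exists>n. y \<le> b n" for y
    using b(2) by (auto simp: filterlim_at_top eventually_sequentially)
  have "incseq (\<lambda>n x. f x * indicator {a..b n} x)"
  proof (intro incseq_SucI le_funI mult_left_mono)
    show "indicator {a..b n} x \<le> (indicator {a..b (Suc n)} x :: ennreal)" for n x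
      using incseq_SucD[OF b(1), of n] by (auto split: split_indicator)
  qed simp
  then have "(SUP n. \<integral>\<^sup>+x\<in>{a..b n}. f x \<partial>lborel) = (\<integral>\<^sup>+x. (SUP n. f x * indicator {a..b n} x) \<partial>lborel)"
    by (rule nn_integral_monotone_convergence_SUP[symmetric]) simp
  then show ?thesis
    by (simp add: SUP_indicator_atLeastAtMost[OF b(1) b_unbounded])
qed

lemma nn_integral_substitution_atLeast:
  fixes f g g' :: "real \<Rightarrow> real"
  assumes f[measurable]: "f \<in> borel_measurable borel" and f_nonneg: "\<And>y. f y \<ge> 0"
    and g: "\<And>x. (g has_real_derivative g' x) (at x)"
    and g'_cont: "continuous_on UNIV g'" and g'_nonneg: "\<And>x. x \<ge> a \<Longrightarrow> g' x \<ge> 0"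
    and g_lim: "filterlim g at_top at_top"
  shows "(\<integral>\<^sup>+x\<in>{a..}. ennreal (f (g x) * g' x) \<partial>lborel) = (\<integral>\<^sup>+y\<in>{g a..}. ennreal (f y) \<partial>lborel)"
proof -
  have g_mono: "g x \<le> g y" if "a \<le> x" "x \<le> y" for x y
    using DERIV_nonneg_imp_nondecreasing[of x y g] that g g'_nonneg by (meson order_trans)
  have "continuous_on UNIV g"
    using g by (meson DERIV_continuous continuous_at_imp_continuous_on)
  then have [measurable]: "g \<in> borel_measurable borel" "g' \<in> borel_measurable borel"
    using g'_cont by (auto intro: borel_measurable_continuous_onI)
  define b where "b n = a + real n" for n
  have b_inc: "incseq b"
    by (simp add: incseq_def b_def)
  have b_lim: "filterlim b at_top sequentially"
    unfolding b_def by (rule filterlim_tendsto_add_at_top[OF tendsto_const filterlim_real_sequentially])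
  have gb_inc: "incseq (\<lambda>n. g (b n))"
    using b_inc by (auto simp: incseq_def b_def intro!: g_mono)
  have finite_piece: "(\<integral>\<^sup>+x\<in>{a..b n}. ennreal (f (g x) * g' x) \<partial>lborel)
      = (\<integral>\<^sup>+y\<in>{g a..g (b n)}. ennreal (f y) \<partial>lborel)" for n
  proof -
    have "(\<integral>\<^sup>+y. f y * indicator {g a..g (b n)} y \<partial>lborel)
        = (\<integral>\<^sup>+x. f (g x) * g' x * indicator {a..b n} x \<partial>lborel)"
    proof (rule nn_integral_substitution[OF _ g continuous_on_subset[OF g'_cont] g'_nonneg])
      show "set_borel_measurable borel {g a..g (b n)} f"
        unfolding set_borel_measurable_def by measurable
    qed (auto simp: b_def)
    then show ?thesis
      by (simp only: nn_integral_set_ennreal)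
  qed
  have "(\<integral>\<^sup>+x\<in>{a..}. ennreal (f (g x) * g' x) \<partial>lborel)
      = (SUP n. \<integral>\<^sup>+x\<in>{a..b n}. ennreal (f (g x) * g' x) \<partial>lborel)"
    by (rule nn_integral_atLeast_SUP[OF _ b_inc b_lim]) measurable
  also have "\<dots> = (SUP n. \<integral>\<^sup>+y\<in>{g a..g (b n)}. ennreal (f y) \<partial>lborel)"
    by (simp only: finite_piece)
  also have "\<dots> = (\<integral>\<^sup>+y\<in>{g a..}. ennreal (f y) \<partial>lborel)"
    by (rule nn_integral_atLeast_SUP[OF _ gb_inc filterlim_compose[OF g_lim b_lim], symmetric]) measurable
  finally show ?thesis .
qed

lemma nn_integral_atLeast_square_substitution:
  fixes F :: "real \<Rightarrow> real"
  assumes [measurable]: "F \<in> borel_measurable borel" and F_nonneg: "\<And>L. F L \<ge> 0"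
  shows "(\<integral>\<^sup>+L\<in>{b\<^sup>2 ..}. ennreal (F L) \<partial>lborel) = (\<integral>\<^sup>+c\<in>{0..}. ennreal (F (b\<^sup>2 + c\<^sup>2) * (2 * c)) \<partial>lborel)"
proof -
  have "(\<integral>\<^sup>+c\<in>{0..}. ennreal (F (b\<^sup>2 + c\<^sup>2) * (2 * c)) \<partial>lborel) = (\<integral>\<^sup>+L\<in>{b\<^sup>2 + 0\<^sup>2 ..}. ennreal (F L) \<partial>lborel)"
  proof (rule nn_integral_substitution_atLeast[where g="\<lambda>c. b\<^sup>2 + c\<^sup>2"])
    show "((\<lambda>c. b\<^sup>2 + c\<^sup>2) has_real_derivative 2 * c) (at c)" for c
      by (auto intro!: derivative_eq_intros)
    show "filterlim (\<lambda>c. b\<^sup>2 + c\<^sup>2) at_top at_top"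
      by (intro filterlim_tendsto_add_at_top[OF tendsto_const] filterlim_pow_at_top filterlim_ident) auto
  qed (auto intro: F_nonneg continuous_intros)
  then show ?thesis
    by simp
qed

text \<open>The substitution \<open>L = b\<^sup>2 + c\<^sup>2\<close> in the inner integral, after \<open>H L\<close> has been spread
  uniformly over the \<open>b\<close>-interval \<open>b\<^sup>2 < L\<close> of length \<open>2 sqrt L\<close>.\<close>
lemma nn_integral_halfline_le_plane:
  fixes H :: "real \<Rightarrow> real"
  assumes [measurable]: "H \<in> borel_measurable borel" and H_nonneg: "\<And>L. H L \<ge> 0"
  shows "(\<integral>\<^sup>+L\<in>{0<..}. ennreal (H L) \<partial>lborel) \<le> (\<integral>\<^sup>+b. \<integral>\<^sup>+c. ennreal (H (b\<^sup>2 + c\<^sup>2)) \<partial>lborel \<partial>lborel)"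
proof -
  let ?F = "\<lambda>L. H L / (2 * sqrt \<bar>L\<bar>)"
  have F_nonneg: "?F L \<ge> 0" for L
    using H_nonneg[of L] by simp
  have spread: "ennreal (H L) * indicator {0<..} L = (\<integral>\<^sup>+b. ennreal (?F L) * indicator {b. b\<^sup>2 < L} b \<partial>lborel)"
    for L
  proof (cases "L > 0")
    case True
    then have "H L = ?F L * (2 * sqrt L)" by simp
    then show ?thesis
      using True F_nonneg[of L]
      by (simp add: nn_integral_cmult_indicator emeasure_lborel_square_less ennreal_mult[symmetric])
  next
    case False
    then show ?thesis
      by (simp add: nn_integral_cmult_indicator emeasure_lborel_square_less ennreal_neg)
  qed
  have "(\<integral>\<^sup>+L\<in>{0<..}. ennreal (H L) \<partial>lborel)
      = (\<integral>\<^sup>+L. \<integral>\<^sup>+b. ennreal (?F L) * indicator {b\<^sup>2<..} L \<partial>lborel \<partial>lborel)"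
    by (simp only: spread) (intro nn_integral_cong, simp split: split_indicator)
  also have "\<dots> = (\<integral>\<^sup>+b. \<integral>\<^sup>+L. ennreal (?F L) * indicator {b\<^sup>2<..} L \<partial>lborel \<partial>lborel)"
    by (rule lborel_pair.Fubini') measurable
  also have "\<dots> \<le> (\<integral>\<^sup>+b. (\<integral>\<^sup>+L\<in>{b\<^sup>2 ..}. ennreal (?F L) \<partial>lborel) \<partial>lborel)"
    by (intro nn_integral_mono) (simp split: split_indicator)
  also have "\<dots> = (\<integral>\<^sup>+b. (\<integral>\<^sup>+c\<in>{0..}. ennreal (?F (b\<^sup>2 + c\<^sup>2) * (2 * c)) \<partial>lborel) \<partial>lborel)"
    by (intro nn_integral_cong nn_integral_atLeast_square_substitution F_nonneg) measurable
  also have "\<dots> \<le> (\<integral>\<^sup>+b. \<integral>\<^sup>+c. ennreal (H (b\<^sup>2 + c\<^sup>2)) \<partial>lborel \<partial>lborel)"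
  proof (intro nn_integral_mono)
    fix b c :: real
    have "c / sqrt (b\<^sup>2 + c\<^sup>2) \<le> 1"
      using real_le_rsqrt[of c "b\<^sup>2 + c\<^sup>2"] by (auto simp: divide_le_eq_1 sum_power2_gt_zero_iff)
    then have "?F (b\<^sup>2 + c\<^sup>2) * (2 * c) \<le> H (b\<^sup>2 + c\<^sup>2)"
      using H_nonneg[of "b\<^sup>2 + c\<^sup>2"] mult_left_le[of "c / sqrt (b\<^sup>2 + c\<^sup>2)" "H (b\<^sup>2 + c\<^sup>2)"]
      by simp
    then show "ennreal (?F (b\<^sup>2 + c\<^sup>2) * (2 * c)) * indicator {0..} c \<le> ennreal (H (b\<^sup>2 + c\<^sup>2))"
      by (simp add: ennreal_leI split: split_indicator)
  qed
  finally show ?thesis .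
qed

lemma nn_integral_nonrelativistic_energy_le:
  fixes f :: "real \<Rightarrow> real"
  assumes [measurable]: "f \<in> borel_measurable borel" and f_nonneg: "\<And>E. 0 \<le> f E" and "e \<le> c"
  shows "(\<integral>\<^sup>+E\<in>{c<..}. ennreal (f E * (1 / sqrt (2 * max (E - e) 0))) \<partial>lborel)
    \<le> (\<integral>\<^sup>+a\<in>{0<..}. ennreal (f (a\<^sup>2 / 2 + c)) \<partial>lborel)"
proof -
  let ?F = "\<lambda>E. f E * (1 / sqrt (2 * max (E - e) 0))"
  have "(\<integral>\<^sup>+E\<in>{c<..}. ennreal (?F E) \<partial>lborel) \<le> (\<integral>\<^sup>+E\<in>{0\<^sup>2 / 2 + c..}. ennreal (?F E) \<partial>lborel)"
    by (intro nn_integral_mono) (simp split: split_indicator)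
  also have "\<dots> = (\<integral>\<^sup>+a\<in>{0..}. ennreal (?F (a\<^sup>2 / 2 + c) * a) \<partial>lborel)"
  proof (rule nn_integral_substitution_atLeast[symmetric])
    show "((\<lambda>a. a\<^sup>2 / 2 + c) has_real_derivative a) (at a)" for a
      by (auto intro!: derivative_eq_intros)
    have "filterlim (\<lambda>a. c + a\<^sup>2 * inverse 2) at_top at_top"
      by (intro filterlim_tendsto_add_at_top[OF tendsto_const] filterlim_at_top_mult_tendsto_pos[OF tendsto_const]
          filterlim_pow_at_top filterlim_ident) auto
    then show "filterlim (\<lambda>a. a\<^sup>2 / 2 + c) at_top at_top"
      by (simp only: divide_inverse add.commute)
    show "?F \<in> borel_measurable borel"
      by measurable
    show "0 \<le> ?F E" for E
      using f_nonneg[of E] by simp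
  qed (simp_all add: continuous_on_id)
  also have "\<dots> \<le> (\<integral>\<^sup>+a\<in>{0<..}. ennreal (f (a\<^sup>2 / 2 + c)) \<partial>lborel)"
  proof (intro nn_integral_mono)
    fix a :: real
    have "a\<^sup>2 \<le> 2 * (a\<^sup>2 / 2 + c - e)"
      using assms(3) by simp
    also have "\<dots> \<le> 2 * max (a\<^sup>2 / 2 + c - e) 0"
      by (rule mult_left_mono) simp_all
    finally have "a \<le> sqrt (2 * max (a\<^sup>2 / 2 + c - e) 0)" if "0 < a"
      by (rule real_le_rsqrt)
    then have "a / sqrt (2 * max (a\<^sup>2 / 2 + c - e) 0) \<le> 1" if "0 < a"
      using that by (auto simp: divide_le_eq_1)
    then have "?F (a\<^sup>2 / 2 + c) * a \<le> f (a\<^sup>2 / 2 + c)" if "0 < a"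
      using that f_nonneg mult_left_le[of "a / sqrt (2 * max (a\<^sup>2 / 2 + c - e) 0)" "f (a\<^sup>2 / 2 + c)"]
      by simp
    then show "ennreal (?F (a\<^sup>2 / 2 + c) * a) * indicator {0..} a \<le> ennreal (f (a\<^sup>2 / 2 + c)) * indicator {0<..} a"
      by (cases "0 < a") (auto intro: ennreal_leI simp: indicator_def)
  qed
  finally show ?thesis .
qed

lemma nn_integral_relativistic_energy_le:
  fixes f :: "real \<Rightarrow> real"
  assumes [measurable]: "f \<in> borel_measurable borel" and f_nonneg: "\<And>E. 0 \<le> f E"
    and p: "0 < p" and k: "0 < k" "k \<le> K"
  shows "(\<integral>\<^sup>+E\<in>{k * sqrt p<..}. ennreal (f E * (max E 0 / K\<^sup>2)) \<partial>lborel)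
    \<le> (\<integral>\<^sup>+a\<in>{0<..}. ennreal (sqrt (p + a\<^sup>2) * f (k * sqrt (p + a\<^sup>2))) \<partial>lborel)"
proof -
  let ?F = "\<lambda>E. f E * (max E 0 / K\<^sup>2)" and ?Q = "\<lambda>a. sqrt (p + a\<^sup>2)"
  have pa_pos: "0 < p + a\<^sup>2" for a
    using p by (simp add: add_pos_nonneg)
  then have Q_pos: "0 < ?Q a" for a
    by simp
  have Q_ge: "a \<le> ?Q a" for a
    using p by (intro real_le_rsqrt) simp
  have "(\<integral>\<^sup>+E\<in>{k * sqrt p<..}. ennreal (?F E) \<partial>lborel) \<le> (\<integral>\<^sup>+E\<in>{k * ?Q 0..}. ennreal (?F E) \<partial>lborel)"
    by (intro nn_integral_mono) (simp split: split_indicator)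
  also have "\<dots> = (\<integral>\<^sup>+a\<in>{0..}. ennreal (?F (k * ?Q a) * (k * a / ?Q a)) \<partial>lborel)"
  proof (rule nn_integral_substitution_atLeast[symmetric])
    show "((\<lambda>a. k * ?Q a) has_real_derivative k * a / ?Q a) (at a)" for a
      using pa_pos[of a] by (auto intro!: derivative_eq_intros simp: field_simps)
    show "continuous_on UNIV (\<lambda>a. k * a / ?Q a)"
      by (intro continuous_intros) (metis Q_pos less_irrefl)
    show "filterlim (\<lambda>a. k * ?Q a) at_top at_top"
      using k Q_ge
      by (intro filterlim_at_top_mono[OF filterlim_tendsto_pos_mult_at_top[OF tendsto_const k(1) filterlim_ident]])
        (auto intro: mult_left_mono)
    show "?F \<in> borel_measurable borel"
      by measurable
    show "0 \<le> ?F E" for E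
      using f_nonneg[of E] by simp
    show "0 \<le> k * a / ?Q a" if "0 \<le> a" for a
      using that k Q_pos[of a] by simp
  qed
  also have "\<dots> \<le> (\<integral>\<^sup>+a\<in>{0<..}. ennreal (?Q a * f (k * ?Q a)) \<partial>lborel)"
  proof (intro nn_integral_mono)
    fix a :: real
    have "?F (k * ?Q a) * (k * a / ?Q a) = (k / K)\<^sup>2 * a * f (k * ?Q a)" if "0 < a"
      using that k Q_pos[of a] by (simp add: field_simps power2_eq_square)
    also have "\<dots> \<le> ?Q a * f (k * ?Q a)" if "0 < a"
    proof (intro mult_right_mono f_nonneg)
      have "(k / K)\<^sup>2 \<le> 1"
        using k by (simp add: power_le_one)
      then have "(k / K)\<^sup>2 * a \<le> a"
        using that by (simp add: mult_left_le_one_le)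
      then show "(k / K)\<^sup>2 * a \<le> ?Q a"
        using Q_ge[of a] by linarith
    qed
    finally show "ennreal (?F (k * ?Q a) * (k * a / ?Q a)) * indicator {0..} a
        \<le> ennreal (?Q a * f (k * ?Q a)) * indicator {0<..} a"
      by (cases "0 < a") (auto intro: ennreal_leI simp: indicator_def)
  qed
  finally show ?thesis .
qed

section \<open>Kinetic densities and the vanishing of \<open>\<Phi>\<close>\<close>

lemma measurable_uncurry3:
  fixes G :: "real \<Rightarrow> real \<Rightarrow> real \<Rightarrow> 'a::topological_space"
  assumes "(\<lambda>(s, t, L). G s t L) \<in> borel_measurable borel"
    and [measurable]: "f \<in> borel_measurable M" "g \<in> borel_measurable M" "h \<in> borel_measurable M"
  shows "(\<lambda>x. G (f x) (g x) (h x)) \<in> borel_measurable M"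
proof -
  have "(\<lambda>x. (f x, g x, h x)) \<in> borel_measurable M"
    by measurable
  from measurable_compose[OF this assms(1)] show ?thesis
    by simp
qed

lemma measurable_uncurry2:
  fixes B :: "real \<Rightarrow> real \<Rightarrow> 'a::topological_space"
  assumes "(\<lambda>(s, L). B s L) \<in> borel_measurable borel"
    and [measurable]: "f \<in> borel_measurable M" "g \<in> borel_measurable M"
  shows "(\<lambda>x. B (f x) (g x)) \<in> borel_measurable M"
proof -
  have "(\<lambda>x. (f x, g x)) \<in> borel_measurable M"
    by measurable
  from measurable_compose[OF this assms(1)] show ?thesis
    by simp
qed

lemma borel_measurable_nn_integral_section:
  fixes K :: "real \<Rightarrow> real \<Rightarrow> real \<Rightarrow> ennreal"
  assumes K: "(\<lambda>(s, L, E). K s L E) \<in> borel_measurable borel"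
  shows "(\<lambda>z. \<integral>\<^sup>+s. K s (snd z) (fst z) \<partial>lborel) \<in> borel_measurable (lborel \<Otimes>\<^sub>M lborel)"
proof -
  note [measurable (raw)] = measurable_uncurry3[OF K]
  have "case_prod (\<lambda>z s. K s (snd z) (fst z)) \<in> borel_measurable ((lborel \<Otimes>\<^sub>M lborel) \<Otimes>\<^sub>M lborel)"
    unfolding case_prod_beta by measurable
  then show ?thesis
    by (rule lborel.borel_measurable_nn_integral)
qed

lemma nn_integral_lborel_reorder3:
  fixes K :: "real \<Rightarrow> real \<Rightarrow> real \<Rightarrow> ennreal"
  assumes K: "(\<lambda>(s, L, E). K s L E) \<in> borel_measurable borel"
  shows "(\<integral>\<^sup>+z. (\<integral>\<^sup>+s. K s (snd z) (fst z) \<partial>lborel) \<partial>lborel)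
    = (\<integral>\<^sup>+s. \<integral>\<^sup>+L. \<integral>\<^sup>+E. K s L E \<partial>lborel \<partial>lborel \<partial>lborel)"
proof -
  note [measurable (raw)] = measurable_uncurry3[OF K]
  note inner = borel_measurable_nn_integral_section[OF K]
  have "(\<integral>\<^sup>+z. (\<integral>\<^sup>+s. K s (snd z) (fst z) \<partial>lborel) \<partial>lborel)
      = (\<integral>\<^sup>+z. (\<integral>\<^sup>+s. K s (snd z) (fst z) \<partial>lborel) \<partial>(lborel \<Otimes>\<^sub>M lborel))"
    by (simp only: lborel_prod)
  also have "\<dots> = (\<integral>\<^sup>+L. \<integral>\<^sup>+E. \<integral>\<^sup>+s. K s L E \<partial>lborel \<partial>lborel \<partial>lborel)"
    using inner by (subst lborel_pair.nn_integral_snd[symmetric]) auto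
  also have "\<dots> = (\<integral>\<^sup>+L. \<integral>\<^sup>+s. \<integral>\<^sup>+E. K s L E \<partial>lborel \<partial>lborel \<partial>lborel)"
    by (intro nn_integral_cong lborel_pair.Fubini') measurable
  also have "\<dots> = (\<integral>\<^sup>+s. \<integral>\<^sup>+L. \<integral>\<^sup>+E. K s L E \<partial>lborel \<partial>lborel \<partial>lborel)"
    by (rule lborel_pair.Fubini') measurable
  finally show ?thesis .
qed

lemma nn_integral_set_lborel_swap:
  fixes f :: "real \<Rightarrow> real \<Rightarrow> ennreal"
  assumes [measurable]: "case_prod f \<in> borel_measurable (lborel \<Otimes>\<^sub>M lborel)" "A \<in> sets borel" "B \<in> sets borel"
  shows "(\<integral>\<^sup>+y\<in>B. (\<integral>\<^sup>+x\<in>A. f x y \<partial>lborel) \<partial>lborel) = (\<integral>\<^sup>+x\<in>A. (\<integral>\<^sup>+y\<in>B. f x y \<partial>lborel) \<partial>lborel)"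
proof -
  have "(\<integral>\<^sup>+y\<in>B. (\<integral>\<^sup>+x\<in>A. f x y \<partial>lborel) \<partial>lborel)
      = (\<integral>\<^sup>+y. \<integral>\<^sup>+x. f x y * indicator A x * indicator B y \<partial>lborel \<partial>lborel)"
    by (intro nn_integral_cong, subst nn_integral_multc) auto
  also have "\<dots> = (\<integral>\<^sup>+x. \<integral>\<^sup>+y. f x y * indicator A x * indicator B y \<partial>lborel \<partial>lborel)"
    by (rule lborel_pair.Fubini') measurable
  also have "\<dots> = (\<integral>\<^sup>+x\<in>A. (\<integral>\<^sup>+y\<in>B. f x y \<partial>lborel) \<partial>lborel)"
    by (intro nn_integral_cong, subst nn_integral_multc[symmetric]) (auto simp: ac_simps)
  finally show ?thesis .
qed

lemma AE_eq_0_where_weight_infinite: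
  assumes [measurable]: "f \<in> borel_measurable M" "W \<in> borel_measurable M"
    and finite: "(\<integral>\<^sup>+z. f z * W z \<partial>M) < \<infinity>"
  shows "AE z in M. W z = \<infinity> \<longrightarrow> f z = 0"
proof -
  have "AE z in M. f z * W z \<noteq> \<infinity>"
    using finite by (intro nn_integral_PInf_AE) auto
  then show ?thesis
    by eventually_elim (auto simp: ennreal_mult_eq_top_iff)
qed

text \<open>For \<open>z = (E, L)\<close> this is \<open>w E\<close> times the measure of the set of radii \<open>s \<ge> 1\<close> at which
  a particle with energy \<open>E\<close> and angular momentum \<open>L > 0\<close> can be found, \<open>B s L\<close> being the
  least energy of such a particle at radius \<open>s\<close>.\<close>
definition escape_weight :: "(real \<Rightarrow> real \<Rightarrow> real) \<Rightarrow> (real \<Rightarrow> real) \<Rightarrow> real \<times> real \<Rightarrow> ennreal" where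
  "escape_weight B w z = (\<integral>\<^sup>+s\<in>{1..}.
     ennreal (w (fst z)) * indicator {0<..} (snd z) * indicator {B s (snd z)<..} (fst z) \<partial>lborel)"

lemma escape_weight_measurable:
  assumes B: "(\<lambda>(s, L). B s L) \<in> borel_measurable borel" and [measurable]: "w \<in> borel_measurable borel"
  shows "escape_weight B w \<in> borel_measurable lborel"
proof -
  note [measurable (raw)] = measurable_uncurry2[OF B]
  have "(\<lambda>(s, L, E). ennreal (w E) * indicator {0<..} L * indicator {B s L<..} E * indicator {1..} s)
      \<in> borel_measurable borel"
    by (simp only: split_beta' borel_prod[symmetric]) measurable
  from borel_measurable_nn_integral_section[OF this] show ?thesis
    unfolding escape_weight_def[abs_def] by (simp add: lborel_prod)
qed

lemma escape_weight_eq_infinity: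
  assumes "0 < w E" "0 < L" "\<forall>\<^sub>F s in at_top. B s L < E"
  shows "escape_weight B w (E, L) = \<infinity>"
proof -
  obtain S where S: "\<And>s. S \<le> s \<Longrightarrow> B s L < E"
    using assms(3) unfolding eventually_at_top_linorder by blast
  have "ennreal (w E) * emeasure lborel {max S 1..} = (\<integral>\<^sup>+s. ennreal (w E) * indicator {max S 1..} s \<partial>lborel)"
    by (simp add: nn_integral_cmult_indicator)
  also have "\<dots> \<le> escape_weight B w (E, L)"
    unfolding escape_weight_def using assms(2) S by (intro nn_integral_mono) (simp split: split_indicator)
  finally show ?thesis
    using assms(1) by (simp add: emeasure_lborel_atLeast ennreal_mult_top top_unique)
qed

definition kinetic_density :: "(real \<Rightarrow> real \<Rightarrow> real \<Rightarrow> real) \<Rightarrow> real^3 \<Rightarrow> ennreal" where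
  "kinetic_density G x = (\<integral>\<^sup>+v. ennreal (G (norm x) ((norm v)\<^sup>2) (angmom x v)) \<partial>lborel)"

context
  fixes G :: "real \<Rightarrow> real \<Rightarrow> real \<Rightarrow> real"
  assumes G_measurable: "(\<lambda>(s, t, L). G s t L) \<in> borel_measurable borel"
begin

lemma kinetic_density_radpt_measurable:
  "(\<lambda>s. kinetic_density G (radpt s)) \<in> borel_measurable borel"
proof -
  note [measurable (raw)] = measurable_uncurry3[OF G_measurable]
  have "(\<lambda>(s, v). ennreal (G (norm (radpt s)) ((norm v)\<^sup>2) (angmom (radpt s) v)))
      \<in> borel_measurable (lborel \<Otimes>\<^sub>M lborel)"
    by measurable
  from lborel.borel_measurable_nn_integral[OF this] show ?thesis
    by (simp add: kinetic_density_def)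
qed

lemma nn_integral_kinetic_density:
  "(\<integral>\<^sup>+x. kinetic_density G x \<partial>lborel)
     = ennreal (4 * pi) * (\<integral>\<^sup>+s\<in>{0..}. ennreal (s\<^sup>2) * kinetic_density G (radpt s) \<partial>lborel)"
proof -
  note [measurable (raw)] = measurable_uncurry3[OF G_measurable]
  have rotate: "kinetic_density G x = kinetic_density G (radpt (norm x))" for x
  proof -
    have "(\<lambda>(t, q). ennreal (G (norm x) (t\<^sup>2) q)) \<in> borel_measurable borel"
      by (simp only: split_beta' borel_prod[symmetric]) measurable
    from nn_integral_angmom_rotate[OF this, of x] show ?thesis
      by (simp add: kinetic_density_def)
  qed
  have "(\<integral>\<^sup>+x. kinetic_density G x \<partial>lborel) = (\<integral>\<^sup>+x. kinetic_density G (radpt (norm (x :: real^3))) \<partial>lborel)"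
    by (rule nn_integral_cong) (rule rotate)
  also have "\<dots> = ennreal (4 * pi) * (\<integral>\<^sup>+s\<in>{0..}. ennreal (s\<^sup>2) * kinetic_density G (radpt s) \<partial>lborel)"
    by (rule nn_integral_norm_real3) (rule kinetic_density_radpt_measurable)
  finally show ?thesis .
qed

lemma kinetic_mass_finite:
  fixes \<rho> :: "real^3 \<Rightarrow> ennreal"
  assumes rho: "\<And>x. x \<noteq> 0 \<Longrightarrow> \<rho> x = kinetic_density G x" and mass: "(\<integral>\<^sup>+x. \<rho> x \<partial>lborel) < \<infinity>"
  shows "(\<integral>\<^sup>+s\<in>{0..}. ennreal (s\<^sup>2) * \<rho> (radpt s) \<partial>lborel) < \<infinity>"
proof -
  have "(\<integral>\<^sup>+x. \<rho> x \<partial>lborel) = (\<integral>\<^sup>+x. kinetic_density G x \<partial>lborel)"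
    using AE_lborel_singleton[of "0 :: real^3"] by (intro nn_integral_cong_AE) (auto elim!: eventually_mono rho)
  also have "\<dots> = ennreal (4 * pi) * (\<integral>\<^sup>+s\<in>{0..}. ennreal (s\<^sup>2) * \<rho> (radpt s) \<partial>lborel)"
  proof -
    have "ennreal (s\<^sup>2) * kinetic_density G (radpt s) = ennreal (s\<^sup>2) * \<rho> (radpt s)" for s
      by (cases "s = 0") (simp_all add: rho)
    then show ?thesis
      by (simp add: nn_integral_kinetic_density)
  qed
  finally show ?thesis
    using mass by (auto simp: ennreal_mult_less_top)
qed

lemma kinetic_tail_mass_finite:
  fixes \<rho> :: "real^3 \<Rightarrow> ennreal"
  assumes rho: "\<And>x. x \<noteq> 0 \<Longrightarrow> \<rho> x = kinetic_density G x" and mass: "(\<integral>\<^sup>+x. \<rho> x \<partial>lborel) < \<infinity>"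
  shows "(\<integral>\<^sup>+s\<in>{1..}. ennreal (s\<^sup>2) * kinetic_density G (radpt s) \<partial>lborel) < \<infinity>"
proof -
  have "(\<integral>\<^sup>+s\<in>{1..}. ennreal (s\<^sup>2) * kinetic_density G (radpt s) \<partial>lborel)
      \<le> (\<integral>\<^sup>+s\<in>{0..}. ennreal (s\<^sup>2) * \<rho> (radpt s) \<partial>lborel)"
    by (intro nn_integral_mono) (simp add: rho split: split_indicator)
  then show ?thesis
    using kinetic_mass_finite[OF rho mass] by (rule le_less_trans)
qed

text \<open>At \<open>(s, 0, 0)\<close> the velocity \<open>v = (a, b, c)\<close> has \<open>|v|\<^sup>2 = a\<^sup>2 + L / s\<^sup>2\<close> with angular
  momentum \<open>L = s\<^sup>2 (b\<^sup>2 + c\<^sup>2)\<close>.\<close>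
lemma kinetic_density_radpt_ge:
  assumes G_nonneg: "\<And>s t L. G s t L \<ge> 0" and s: "s > 0"
  shows "(\<integral>\<^sup>+L\<in>{0<..}. (\<integral>\<^sup>+a\<in>{0<..}. ennreal (G s (a\<^sup>2 + L / s\<^sup>2) L) \<partial>lborel) \<partial>lborel)
    \<le> ennreal (s\<^sup>2) * kinetic_density G (radpt s)"
proof -
  note [measurable (raw)] = measurable_uncurry3[OF G_measurable]
  have transversal: "(\<integral>\<^sup>+L\<in>{0<..}. ennreal (G s (a\<^sup>2 + L / s\<^sup>2) L) \<partial>lborel)
      \<le> ennreal (s\<^sup>2) * (\<integral>\<^sup>+b. \<integral>\<^sup>+c. ennreal (G s (a\<^sup>2 + b\<^sup>2 + c\<^sup>2) (s\<^sup>2 * (b\<^sup>2 + c\<^sup>2))) \<partial>lborel \<partial>lborel)"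
    for a
  proof -
    have "(\<integral>\<^sup>+L\<in>{0<..}. ennreal (G s (a\<^sup>2 + L / s\<^sup>2) L) \<partial>lborel)
        = ennreal (s\<^sup>2) * (\<integral>\<^sup>+L\<in>{0<..}. ennreal (G s (a\<^sup>2 + L) (s\<^sup>2 * L)) \<partial>lborel)"
      using s by (subst nn_integral_real_affine[where c="s\<^sup>2" and t=0]) (auto simp: indicator_def zero_less_mult_iff)
    also have "\<dots> \<le> ennreal (s\<^sup>2) * (\<integral>\<^sup>+b. \<integral>\<^sup>+c. ennreal (G s (a\<^sup>2 + (b\<^sup>2 + c\<^sup>2)) (s\<^sup>2 * (b\<^sup>2 + c\<^sup>2))) \<partial>lborel \<partial>lborel)"
      by (intro mult_left_mono nn_integral_halfline_le_plane[where H="\<lambda>L. G s (a\<^sup>2 + L) (s\<^sup>2 * L)"])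
        (auto intro: G_nonneg)
    finally show ?thesis
      by (simp add: add.assoc)
  qed
  have "(\<integral>\<^sup>+L\<in>{0<..}. (\<integral>\<^sup>+a\<in>{0<..}. ennreal (G s (a\<^sup>2 + L / s\<^sup>2) L) \<partial>lborel) \<partial>lborel)
      = (\<integral>\<^sup>+a\<in>{0<..}. (\<integral>\<^sup>+L\<in>{0<..}. ennreal (G s (a\<^sup>2 + L / s\<^sup>2) L) \<partial>lborel) \<partial>lborel)"
    by (rule nn_integral_set_lborel_swap) measurable
  also have "\<dots> \<le> (\<integral>\<^sup>+a. (\<integral>\<^sup>+L\<in>{0<..}. ennreal (G s (a\<^sup>2 + L / s\<^sup>2) L) \<partial>lborel) \<partial>lborel)"
    by (intro nn_integral_mono) (simp split: split_indicator)
  also have "\<dots> \<le> (\<integral>\<^sup>+a. ennreal (s\<^sup>2) * (\<integral>\<^sup>+b. \<integral>\<^sup>+c. ennreal (G s (a\<^sup>2 + b\<^sup>2 + c\<^sup>2) (s\<^sup>2 * (b\<^sup>2 + c\<^sup>2))) \<partial>lborel \<partial>lborel) \<partial>lborel)"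
    by (intro nn_integral_mono transversal)
  also have "\<dots> = ennreal (s\<^sup>2) * (\<integral>\<^sup>+a. \<integral>\<^sup>+b. \<integral>\<^sup>+c. ennreal (G s (a\<^sup>2 + b\<^sup>2 + c\<^sup>2) (s\<^sup>2 * (b\<^sup>2 + c\<^sup>2))) \<partial>lborel \<partial>lborel \<partial>lborel)"
    by (rule nn_integral_cmult) measurable
  also have "(\<integral>\<^sup>+a. \<integral>\<^sup>+b. \<integral>\<^sup>+c. ennreal (G s (a\<^sup>2 + b\<^sup>2 + c\<^sup>2) (s\<^sup>2 * (b\<^sup>2 + c\<^sup>2))) \<partial>lborel \<partial>lborel \<partial>lborel)
      = kinetic_density G (radpt s)"
    using s by (simp add: kinetic_density_def nn_integral_lborel_real3 norm_vector3_sq angmom_radpt_vector3)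
  finally show ?thesis .
qed

lemma nn_integral_escape_weight_le:
  fixes Phi :: "real \<times> real \<Rightarrow> real" and B :: "real \<Rightarrow> real \<Rightarrow> real" and w :: "real \<Rightarrow> real"
  assumes G_nonneg: "\<And>s t L. G s t L \<ge> 0"
    and [measurable]: "Phi \<in> borel_measurable borel" and Phi_nonneg: "\<And>z. Phi z \<ge> 0"
    and B_meas: "(\<lambda>(s, L). B s L) \<in> borel_measurable borel"
    and [measurable]: "w \<in> borel_measurable borel" and w_nonneg: "\<And>E. w E \<ge> 0"
    and energy: "\<And>s L. 1 \<le> s \<Longrightarrow> 0 < L \<Longrightarrow>
      (\<integral>\<^sup>+E\<in>{B s L<..}. ennreal (Phi (E, L) * w E) \<partial>lborel)
        \<le> (\<integral>\<^sup>+a\<in>{0<..}. ennreal (G s (a\<^sup>2 + L / s\<^sup>2) L) \<partial>lborel)"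
  shows "(\<integral>\<^sup>+z. ennreal (Phi z) * escape_weight B w z \<partial>lborel)
    \<le> (\<integral>\<^sup>+s\<in>{1..}. ennreal (s\<^sup>2) * kinetic_density G (radpt s) \<partial>lborel)"
proof -
  note [measurable (raw)] = measurable_uncurry2[OF B_meas]
  define K where "K s L E = ennreal (Phi (E, L)) *
    (ennreal (w E) * indicator {0<..} L * indicator {B s L<..} E * indicator {1..} s)" for s L E
  have K_meas: "(\<lambda>(s, L, E). K s L E) \<in> borel_measurable borel"
    unfolding K_def by (simp only: split_beta' borel_prod[symmetric]) measurable
  have "(\<integral>\<^sup>+z. ennreal (Phi z) * escape_weight B w z \<partial>lborel) = (\<integral>\<^sup>+z. \<integral>\<^sup>+s. K s (snd z) (fst z) \<partial>lborel \<partial>lborel)"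
    unfolding escape_weight_def K_def by (intro nn_integral_cong, subst nn_integral_cmult[symmetric]) auto
  also have "\<dots> = (\<integral>\<^sup>+s. \<integral>\<^sup>+L. \<integral>\<^sup>+E. K s L E \<partial>lborel \<partial>lborel \<partial>lborel)"
    by (rule nn_integral_lborel_reorder3[OF K_meas])
  also have "\<dots> \<le> (\<integral>\<^sup>+s\<in>{1..}. ennreal (s\<^sup>2) * kinetic_density G (radpt s) \<partial>lborel)"
  proof (intro nn_integral_mono)
    fix s :: real
    show "(\<integral>\<^sup>+L. \<integral>\<^sup>+E. K s L E \<partial>lborel \<partial>lborel)
        \<le> ennreal (s\<^sup>2) * kinetic_density G (radpt s) * indicator {1..} s"
    proof (cases "1 \<le> s")
      case True
      have "(\<integral>\<^sup>+L. \<integral>\<^sup>+E. K s L E \<partial>lborel \<partial>lborel)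
          = (\<integral>\<^sup>+L\<in>{0<..}. (\<integral>\<^sup>+E\<in>{B s L<..}. ennreal (Phi (E, L) * w E) \<partial>lborel) \<partial>lborel)"
        using True Phi_nonneg w_nonneg unfolding K_def
        by (intro nn_integral_cong, subst nn_integral_multc[symmetric])
          (auto simp: ennreal_mult' mult_ac)
      also have "\<dots> \<le> (\<integral>\<^sup>+L\<in>{0<..}. (\<integral>\<^sup>+a\<in>{0<..}. ennreal (G s (a\<^sup>2 + L / s\<^sup>2) L) \<partial>lborel) \<partial>lborel)"
        using True by (intro nn_integral_mono) (auto intro: energy split: split_indicator)
      also have "\<dots> \<le> ennreal (s\<^sup>2) * kinetic_density G (radpt s)"
        using True by (intro kinetic_density_radpt_ge G_nonneg) simp
      finally show ?thesis
        using True by simp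
    qed (simp add: K_def[abs_def])
  qed
  finally show ?thesis .
qed

lemma AE_eq_0_if_mass_finite:
  fixes Phi :: "real \<times> real \<Rightarrow> real" and B :: "real \<Rightarrow> real \<Rightarrow> real" and w :: "real \<Rightarrow> real"
    and P :: "real \<Rightarrow> bool" and \<rho> :: "real^3 \<Rightarrow> ennreal"
  assumes G_nonneg: "\<And>s t L. G s t L \<ge> 0"
    and Phi_meas[measurable]: "Phi \<in> borel_measurable borel" and Phi_nonneg: "\<And>z. Phi z \<ge> 0"
    and B_meas: "(\<lambda>(s, L). B s L) \<in> borel_measurable borel"
    and w_meas[measurable]: "w \<in> borel_measurable borel" and w_nonneg: "\<And>E. w E \<ge> 0"
    and energy: "\<And>s L. 1 \<le> s \<Longrightarrow> 0 < L \<Longrightarrow>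
      (\<integral>\<^sup>+E\<in>{B s L<..}. ennreal (Phi (E, L) * w E) \<partial>lborel)
        \<le> (\<integral>\<^sup>+a\<in>{0<..}. ennreal (G s (a\<^sup>2 + L / s\<^sup>2) L) \<partial>lborel)"
    and rho: "\<And>x. x \<noteq> 0 \<Longrightarrow> \<rho> x = kinetic_density G x" and mass: "(\<integral>\<^sup>+x. \<rho> x \<partial>lborel) < \<infinity>"
    and escape: "\<And>E L. P E \<Longrightarrow> 0 < L \<Longrightarrow> 0 < w E \<and> (\<forall>\<^sub>F s in at_top. B s L < E)"
  shows "AE z in lborel. P (fst z) \<and> 0 < snd z \<longrightarrow> Phi z = 0"
proof -
  have "(\<integral>\<^sup>+z. ennreal (Phi z) * escape_weight B w z \<partial>lborel) < \<infinity>"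
    using nn_integral_escape_weight_le[OF G_nonneg Phi_meas Phi_nonneg B_meas w_meas w_nonneg energy]
      kinetic_tail_mass_finite[OF rho mass]
    by (rule le_less_trans)
  then have "AE z in lborel. escape_weight B w z = \<infinity> \<longrightarrow> ennreal (Phi z) = 0"
    by (intro AE_eq_0_where_weight_infinite escape_weight_measurable[OF B_meas w_meas]) auto
  then show ?thesis
  proof (rule eventually_mono, intro impI)
    fix z :: "real \<times> real"
    assume "escape_weight B w z = \<infinity> \<longrightarrow> ennreal (Phi z) = 0" and "P (fst z) \<and> 0 < snd z"
    then show "Phi z = 0"
      using escape escape_weight_eq_infinity[of w "fst z" "snd z" B] Phi_nonneg[of z] by auto
  qed
qed

end

section \<open>Limits of the potentials\<close>

lemma nondecreasing_bounded_tendsto: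
  fixes f :: "real \<Rightarrow> real"
  assumes mono: "\<And>x y. a \<le> x \<Longrightarrow> x \<le> y \<Longrightarrow> f x \<le> f y" and bounded: "\<And>x. a \<le> x \<Longrightarrow> f x \<le> C"
  shows "\<exists>l. (f \<longlongrightarrow> l) at_top \<and> (\<forall>x\<ge>a. f x \<le> l)"
proof -
  define l where "l = (SUP x\<in>{a..}. f x)"
  have bdd: "bdd_above (f ` {a..})"
    using bounded by (intro bdd_aboveI[of _ C]) auto
  have le: "f x \<le> l" if "a \<le> x" for x
    unfolding l_def using bdd that by (intro cSUP_upper) auto
  have "(f \<longlongrightarrow> l) at_top"
  proof (rule order_tendstoI)
    fix y assume "y < l"
    then obtain x0 where "a \<le> x0" "y < f x0"
      unfolding l_def using bdd by (subst (asm) less_cSUP_iff) auto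
    then show "\<forall>\<^sub>F x in at_top. y < f x"
      unfolding eventually_at_top_linorder by (auto intro: less_le_trans mono)
  next
    fix y assume "l < y"
    then show "\<forall>\<^sub>F x in at_top. f x < y"
      unfolding eventually_at_top_linorder by (auto intro: le_less_trans le)
  qed
  then show ?thesis
    using le by blast
qed

lemma nondecreasing_if_deriv_nonneg:
  assumes "\<forall>r>0. (f has_real_derivative f' r) (at r)" and "\<And>r. 0 < r \<Longrightarrow> 0 \<le> f' r"
    and "0 < x" "x \<le> y"
  shows "f x \<le> f y"
proof (rule DERIV_nonneg_imp_nondecreasing[of x y f])
  fix z assume "x \<le> z"
  then have "0 < z"
    using assms(3) by linarith
  then show "\<exists>d. (f has_real_derivative d) (at z) \<and> 0 \<le> d"
    using assms(1,2) by blast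
qed (use assms in simp)

text \<open>The potential is increasing, and \<open>U r + C / r\<close> is decreasing.\<close>
lemma potential_tendsto:
  fixes U U' :: "real \<Rightarrow> real"
  assumes dU: "\<forall>r>0. (U has_real_derivative U' r) (at r)"
    and U'_nonneg: "\<And>r. 0 < r \<Longrightarrow> 0 \<le> U' r" and U'_le: "\<And>r. 0 < r \<Longrightarrow> U' r \<le> C / r\<^sup>2"
  shows "\<exists>l. (U \<longlongrightarrow> l) at_top \<and> (\<forall>r\<ge>1. U r \<le> l)"
proof (rule nondecreasing_bounded_tendsto)
  show "U x \<le> U y" if "1 \<le> x" "x \<le> y" for x y
    using that by (intro nondecreasing_if_deriv_nonneg[OF dU U'_nonneg]) auto
  have C: "0 \<le> C"
    using U'_nonneg[of 1] U'_le[of 1] by simp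
  show "U x \<le> U 1 + C" if x: "1 \<le> x" for x
  proof -
    have "U x + C / x \<le> U 1 + C / 1"
    proof (rule DERIV_nonpos_imp_nonincreasing[OF x])
      fix y assume y: "1 \<le> y" "y \<le> x"
      have "((\<lambda>r. U r + C / r) has_real_derivative U' y - C / y\<^sup>2) (at y)"
        using dU y by (auto intro!: derivative_eq_intros simp: power2_eq_square)
      moreover have "U' y - C / y\<^sup>2 \<le> 0"
        using U'_le[of y] y by simp
      ultimately show "\<exists>d. ((\<lambda>r. U r + C / r) has_real_derivative d) (at y) \<and> d \<le> 0"
        by blast
    qed
    moreover have "0 \<le> C / x"
      using C x by simp
    ultimately show ?thesis
      by simp
  qed
qed


lemma field_equation_mu'_nonneg:
  fixes lam mu' m r p :: real
  assumes metric: "exp (-2 * lam) = 1 - 2 * m / r" and "0 \<le> m" "0 < r"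
    and mu_eq: "exp (-2 * lam) * (2 * r * mu' + 1) - 1 = 8 * pi * r\<^sup>2 * p" and "0 \<le> p"
  shows "0 \<le> mu'"
proof (rule ccontr)
  assume "\<not> 0 \<le> mu'"
  then have "exp (-2 * lam) * (2 * r * mu' + 1) < exp (-2 * lam) * 1"
    using \<open>0 < r\<close> by (intro mult_strict_left_mono) (auto simp: mult_pos_neg)
  also have "\<dots> \<le> 1"
    using metric assms(2,3) by simp
  finally show False
    using mu_eq \<open>0 \<le> p\<close> by (smt (verit) mult_nonneg_nonneg pi_ge_zero zero_le_power2)
qed

text \<open>Far out, where \<open>2 m / r \<le> 1/2\<close>, the metric coefficient \<open>exp (-2 \<lambda>)\<close> stays in \<open>[1/2, 1]\<close>.\<close>
lemma field_equation_far_field: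
  fixes lam lam' mu' m M r rho p :: real
  assumes metric: "exp (-2 * lam) = 1 - 2 * m / r" and m: "0 \<le> m" "m \<le> M" and r: "4 * M \<le> r" "0 < r"
    and lam_eq: "exp (-2 * lam) * (2 * r * lam' - 1) + 1 = 8 * pi * r\<^sup>2 * rho"
    and mu_eq: "exp (-2 * lam) * (2 * r * mu' + 1) - 1 = 8 * pi * r\<^sup>2 * p" and "p \<le> rho"
  shows "lam \<le> ln 2 / 2" and "mu' - lam' \<le> 4 * M / r\<^sup>2"
proof -
  let ?D = "exp (-2 * lam)"
  have "2 * m / r \<le> 1 / 2"
    using m r by (simp add: divide_le_eq)
  then have D_half: "1 / 2 \<le> ?D"
    using metric by simp
  then have "ln (1 / 2) \<le> -2 * lam"
    using ln_le_cancel_iff[of "1/2" ?D] by simp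
  then show "lam \<le> ln 2 / 2"
    by (simp add: ln_div)
  have "?D * (2 * r * (mu' - lam')) \<le> 2 - 2 * ?D"
  proof -
    have "?D * (2 * r * mu' + 1) - 1 - (?D * (2 * r * lam' - 1) + 1) = 8 * pi * r\<^sup>2 * (p - rho)"
      using lam_eq mu_eq by (simp add: algebra_simps)
    also have "\<dots> \<le> 0"
      using \<open>p \<le> rho\<close> by (simp add: mult_nonneg_nonpos)
    finally show ?thesis
      by (simp add: algebra_simps)
  qed
  then have "r * (mu' - lam') \<le> (1 - ?D) / ?D"
    by (simp add: field_simps)
  also have "\<dots> \<le> (2 * M / r) / (1 / 2)"
  proof (rule frac_le)
    show "1 - ?D \<le> 2 * M / r"
      using metric m r by (simp add: divide_right_mono)
  qed (use D_half metric m r in \<open>auto simp: divide_le_eq\<close>)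
  finally show "mu' - lam' \<le> 4 * M / r\<^sup>2"
    using r by (simp add: power2_eq_square field_simps)
qed

text \<open>\<open>\<mu>\<close> is increasing, and \<open>\<mu> - \<lambda> + 4 M / r\<close> is decreasing far out, where \<open>\<lambda>\<close> is bounded.\<close>
lemma field_equations_mu_tendsto:
  fixes lam mu lam' mu' m rho p :: "real \<Rightarrow> real" and M :: real
  assumes dlam: "\<forall>r>0. (lam has_real_derivative lam' r) (at r)"
    and dmu: "\<forall>r>0. (mu has_real_derivative mu' r) (at r)"
    and metric: "\<And>r. 0 < r \<Longrightarrow> exp (-2 * lam r) = 1 - 2 * m r / r"
    and m: "\<And>r. 0 \<le> m r" "\<And>r. m r \<le> M"
    and lam_eq: "\<And>r. 0 < r \<Longrightarrow> exp (-2 * lam r) * (2 * r * lam' r - 1) + 1 = 8 * pi * r\<^sup>2 * rho r"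
    and mu_eq: "\<And>r. 0 < r \<Longrightarrow> exp (-2 * lam r) * (2 * r * mu' r + 1) - 1 = 8 * pi * r\<^sup>2 * p r"
    and p: "\<And>r. 0 < r \<Longrightarrow> 0 \<le> p r" "\<And>r. 0 < r \<Longrightarrow> p r \<le> rho r"
  shows "\<exists>l. (mu \<longlongrightarrow> l) at_top \<and> (\<forall>r\<ge>1. mu r \<le> l)"
proof -
  define R where "R = max 1 (4 * M)"
  have R: "1 \<le> R" "4 * M \<le> R"
    by (auto simp: R_def)
  have M: "0 \<le> M"
    using m[of 1] by linarith
  have mu_mono: "mu x \<le> mu y" if "1 \<le> x" "x \<le> y" for x y
    using that field_equation_mu'_nonneg[OF metric m(1) _ mu_eq p(1)]
    by (intro nondecreasing_if_deriv_nonneg[OF dmu]) auto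
  note far = field_equation_far_field[OF metric m _ _ lam_eq mu_eq p(2)]
  define h where "h r = mu r - lam r + 4 * M / r" for r
  have h_le: "h r \<le> h R" if "R \<le> r" for r
  proof (rule DERIV_nonpos_imp_nonincreasing[OF that])
    fix y assume y: "R \<le> y" "y \<le> r"
    then have "0 < y"
      using R by linarith
    then have "(h has_real_derivative mu' y - lam' y - 4 * M / y\<^sup>2) (at y)"
      unfolding h_def using dmu dlam by (auto intro!: derivative_eq_intros simp: power2_eq_square)
    moreover have "mu' y - lam' y - 4 * M / y\<^sup>2 \<le> 0"
      using far(2)[of y] y R \<open>0 < y\<close> by simp
    ultimately show "\<exists>d. (h has_real_derivative d) (at y) \<and> d \<le> 0"
      by blast
  qed
  have mu_le: "mu r \<le> h R + ln 2 / 2" if "R \<le> r" for r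
  proof -
    have "0 \<le> 4 * M / r"
      using M R that by simp
    then show ?thesis
      using h_le[OF that] far(1)[of r] that R unfolding h_def by simp
  qed
  show ?thesis
  proof (rule nondecreasing_bounded_tendsto[OF mu_mono])
    show "mu x \<le> h R + ln 2 / 2" if "1 \<le> x" for x
      using that mu_mono[of x "max x R"] mu_le[of "max x R"] by simp
  qed
qed

section \<open>The two cases\<close>

lemma enn2real_set_nn_integral_mono:
  assumes "A \<subseteq> B" and "(\<integral>\<^sup>+x\<in>B. f x \<partial>M) < \<infinity>"
  shows "enn2real (\<integral>\<^sup>+x\<in>A. f x \<partial>M) \<le> enn2real (\<integral>\<^sup>+x\<in>B. f x \<partial>M)"
proof -
  have "(\<integral>\<^sup>+x\<in>A. f x \<partial>M) \<le> (\<integral>\<^sup>+x\<in>B. f x \<partial>M)"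
    using assms(1) by (intro nn_integral_mono) (auto split: split_indicator)
  then show ?thesis
    using assms(2) by (intro enn2real_mono) auto
qed

lemma continuous_on_pos_if_deriv:
  "\<forall>r>0. (f has_real_derivative f' r) (at r) \<Longrightarrow> continuous_on {0<..} f"
  by (intro continuous_at_imp_continuous_on) (auto intro: DERIV_continuous)

text \<open>The potentials are only given on \<open>]0, \<infinity>[\<close>; the junk value \<open>f 1\<close> on \<open>]-\<infinity>, 0]\<close> makes
  them Borel measurable on the whole line.\<close>
definition pos_extend :: "(real \<Rightarrow> real) \<Rightarrow> real \<Rightarrow> real" where
  "pos_extend f s = (if 0 < s then f s else f 1)"

lemma pos_extend_pos[simp]: "0 < s \<Longrightarrow> pos_extend f s = f s"
  by (simp add: pos_extend_def)

lemma borel_measurable_pos_extend: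
  assumes "continuous_on {0<..} f"
  shows "pos_extend f \<in> borel_measurable borel"
proof -
  have eq: "pos_extend f = (\<lambda>s. indicator {0<..} s *\<^sub>R f s + indicator {..0} s *\<^sub>R f 1)"
    by (rule ext) (simp add: pos_extend_def split: split_indicator)
  have pos_part: "(\<lambda>s. indicator {0<..} s *\<^sub>R f s) \<in> borel_measurable borel"
    using assms by (intro borel_measurable_continuous_on_indicator) auto
  show ?thesis
    unfolding eq by (rule borel_measurable_add[OF pos_part]) measurable
qed

lemma tendsto_pos_extend: "(f \<longlongrightarrow> l) at_top \<Longrightarrow> (pos_extend f \<longlongrightarrow> l) at_top"
  by (rule tendsto_cong[THEN iffD1, rotated])
    (auto simp: pos_extend_def eventually_at_top_linorder intro: exI[of _ 1])

definition nr_phase_density :: "(real \<times> real \<Rightarrow> real) \<Rightarrow> (real \<Rightarrow> real) \<Rightarrow> real \<Rightarrow> real \<Rightarrow> real \<Rightarrow> real" where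
  "nr_phase_density Phi U s t L = Phi (t / 2 + pos_extend U s, L)"

lemma nr_phase_density_measurable:
  assumes [measurable]: "Phi \<in> borel_measurable borel" and "continuous_on {0<..} U"
  shows "(\<lambda>(s, t, L). nr_phase_density Phi U s t L) \<in> borel_measurable borel"
proof -
  note [measurable] = borel_measurable_pos_extend[OF assms(2)]
  show ?thesis
    unfolding nr_phase_density_def by (simp only: split_beta' borel_prod[symmetric]) measurable
qed

lemma nr_rho_eq_kinetic_density: "x \<noteq> 0 \<Longrightarrow> nr_rho Phi U x = kinetic_density (nr_phase_density Phi U) x"
  by (simp add: nr_rho_def nr_f_def kinetic_density_def nr_phase_density_def)

lemma nr_energy_le:
  assumes [measurable]: "Phi \<in> borel_measurable borel" and Phi_nonneg: "\<And>z. Phi z \<ge> 0"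
    and s: "0 < s" and L: "0 \<le> L" and U: "U 1 \<le> U s"
  shows "(\<integral>\<^sup>+E\<in>{L / (2 * s\<^sup>2) + pos_extend U s<..}. ennreal (Phi (E, L) * (1 / sqrt (2 * max (E - U 1) 0))) \<partial>lborel)
    \<le> (\<integral>\<^sup>+a\<in>{0<..}. ennreal (nr_phase_density Phi U s (a\<^sup>2 + L / s\<^sup>2) L) \<partial>lborel)"
proof -
  have "U 1 \<le> L / (2 * s\<^sup>2) + pos_extend U s"
    using s L U by (simp add: add_increasing)
  then have "(\<integral>\<^sup>+E\<in>{L / (2 * s\<^sup>2) + pos_extend U s<..}. ennreal (Phi (E, L) * (1 / sqrt (2 * max (E - U 1) 0))) \<partial>lborel)
      \<le> (\<integral>\<^sup>+a\<in>{0<..}. ennreal (Phi (a\<^sup>2 / 2 + (L / (2 * s\<^sup>2) + pos_extend U s), L)) \<partial>lborel)"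
    by (intro nn_integral_nonrelativistic_energy_le[where f="\<lambda>E. Phi (E, L)"]) (auto simp: Phi_nonneg)
  moreover have "a\<^sup>2 / 2 + (L / (2 * s\<^sup>2) + pos_extend U s) = (a\<^sup>2 + L / s\<^sup>2) / 2 + pos_extend U s" for a
    by (simp add: field_simps)
  ultimately show ?thesis
    by (simp add: nr_phase_density_def)
qed

lemma nr_escape:
  assumes "(U \<longlongrightarrow> l) at_top" and "l < E"
  shows "\<forall>\<^sub>F s in at_top. L / (2 * s\<^sup>2) + pos_extend U s < E"
proof -
  have "((\<lambda>s. L / (2 * s\<^sup>2) + pos_extend U s) \<longlongrightarrow> 0 + l) at_top"
  proof (intro tendsto_add tendsto_pos_extend assms(1))
    show "((\<lambda>s. L / (2 * s\<^sup>2)) \<longlongrightarrow> 0) at_top"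
      by (intro tendsto_divide_0[OF tendsto_const] filterlim_at_top_imp_at_infinity
          filterlim_tendsto_pos_mult_at_top[OF tendsto_const] filterlim_pow_at_top filterlim_ident) auto
  qed
  then show ?thesis
    using assms(2) by (intro order_tendstoD(2)) auto
qed

lemma nonrelativistic_case:
  fixes Phi :: "real \<times> real \<Rightarrow> real" and U U' :: "real \<Rightarrow> real"
  assumes Phi_meas[measurable]: "Phi \<in> borel_measurable borel" and Phi_nonneg: "\<And>z. Phi z \<ge> 0"
    and dU: "\<forall>r>0. (U has_real_derivative U' r) (at r)"
    and U': "\<forall>r>0. (\<integral>\<^sup>+ s\<in>{0..r}. ennreal (s^2) * nr_rho Phi U (radpt s) \<partial>lborel) \<noteq> \<infinity> \<and>
               U' r = 4 * pi / r^2 *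
                 enn2real (\<integral>\<^sup>+ s\<in>{0..r}. ennreal (s^2) * nr_rho Phi U (radpt s) \<partial>lborel)"
    and mass: "(\<integral>\<^sup>+ x. nr_rho Phi U x \<partial>lborel) < \<infinity>"
  shows "\<exists>U_inf. (U \<longlongrightarrow> U_inf) at_top \<and>
             (AE z in lborel. fst z > U_inf \<and> snd z > 0 \<longrightarrow> Phi z = 0)"
proof -
  note [measurable] = borel_measurable_pos_extend[OF continuous_on_pos_if_deriv[OF dU]]
  note G_meas = nr_phase_density_measurable[OF Phi_meas continuous_on_pos_if_deriv[OF dU]]
  note rho = nr_rho_eq_kinetic_density[of _ Phi U]
  define M where "M = (\<integral>\<^sup>+s\<in>{0..}. ennreal (s\<^sup>2) * nr_rho Phi U (radpt s) \<partial>lborel)"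
  have "M < \<infinity>"
    unfolding M_def by (rule kinetic_mass_finite[OF G_meas rho mass])
  then have U'_bounds: "0 \<le> U' r \<and> U' r \<le> 4 * pi * enn2real M / r\<^sup>2" if "0 < r" for r
    using U' that enn2real_set_nn_integral_mono[of "{0..r}" "{0..}"]
    by (simp add: M_def divide_right_mono)
  have U_mono: "U x \<le> U y" if "1 \<le> x" "x \<le> y" for x y
    using that U'_bounds by (intro nondecreasing_if_deriv_nonneg[OF dU]) auto
  obtain l where l: "(U \<longlongrightarrow> l) at_top" and U_le: "\<And>r. 1 \<le> r \<Longrightarrow> U r \<le> l"
    using potential_tendsto[OF dU] U'_bounds by blast
  have "AE z in lborel. l < fst z \<and> 0 < snd z \<longrightarrow> Phi z = 0"
  proof (rule AE_eq_0_if_mass_finite[OF G_meas _ Phi_meas Phi_nonneg _ _ _ _ rho mass])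
    show "(\<lambda>(s, L). L / (2 * s\<^sup>2) + pos_extend U s) \<in> borel_measurable borel"
      by (simp only: split_beta' borel_prod[symmetric]) measurable
    show "(\<integral>\<^sup>+E\<in>{L / (2 * s\<^sup>2) + pos_extend U s<..}. ennreal (Phi (E, L) * (1 / sqrt (2 * max (E - U 1) 0))) \<partial>lborel)
        \<le> (\<integral>\<^sup>+a\<in>{0<..}. ennreal (nr_phase_density Phi U s (a\<^sup>2 + L / s\<^sup>2) L) \<partial>lborel)"
      if "1 \<le> s" "0 < L" for s L
      using that U_mono[of 1 s] by (intro nr_energy_le Phi_nonneg) auto
    show "0 < 1 / sqrt (2 * max (E - U 1) 0) \<and> (\<forall>\<^sub>F s in at_top. L / (2 * s\<^sup>2) + pos_extend U s < E)"
      if "l < E" for E L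
      using that U_le[of 1] nr_escape[OF l] by simp
  qed (auto simp: nr_phase_density_def Phi_nonneg)
  then show ?thesis
    using l by blast
qed

text \<open>The absolute value only matters for \<open>t < -1\<close>, which \<open>t = |v|\<^sup>2\<close> never reaches.\<close>
definition rel_phase_density :: "(real \<times> real \<Rightarrow> real) \<Rightarrow> (real \<Rightarrow> real) \<Rightarrow> real \<Rightarrow> real \<Rightarrow> real \<Rightarrow> real" where
  "rel_phase_density Phi mu s t L = \<bar>sqrt (1 + t)\<bar> * Phi (exp (pos_extend mu s) * sqrt (1 + t), L)"

lemma rel_phase_density_measurable:
  assumes [measurable]: "Phi \<in> borel_measurable borel" and "continuous_on {0<..} mu"
  shows "(\<lambda>(s, t, L). rel_phase_density Phi mu s t L) \<in> borel_measurable borel"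
proof -
  note [measurable] = borel_measurable_pos_extend[OF assms(2)]
  show ?thesis
    unfolding rel_phase_density_def by (simp only: split_beta' borel_prod[symmetric]) measurable
qed

lemma rel_rho_eq_kinetic_density: "x \<noteq> 0 \<Longrightarrow> rel_rho Phi mu x = kinetic_density (rel_phase_density Phi mu) x"
  by (simp add: rel_rho_def rel_f_def kinetic_density_def rel_phase_density_def)

lemma rel_energy_le:
  assumes [measurable]: "Phi \<in> borel_measurable borel" and Phi_nonneg: "\<And>z. Phi z \<ge> 0"
    and s: "0 < s" and L: "0 \<le> L" and mu: "mu s \<le> l"
  shows "(\<integral>\<^sup>+E\<in>{exp (pos_extend mu s) * sqrt (1 + L / s\<^sup>2)<..}. ennreal (Phi (E, L) * (max E 0 / (exp l)\<^sup>2)) \<partial>lborel)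
    \<le> (\<integral>\<^sup>+a\<in>{0<..}. ennreal (rel_phase_density Phi mu s (a\<^sup>2 + L / s\<^sup>2) L) \<partial>lborel)"
proof -
  have "exp (pos_extend mu s) \<le> exp l"
    using s mu by simp
  moreover have "0 < 1 + L / s\<^sup>2"
    using L by (simp add: add_pos_nonneg)
  ultimately have "(\<integral>\<^sup>+E\<in>{exp (pos_extend mu s) * sqrt (1 + L / s\<^sup>2)<..}. ennreal (Phi (E, L) * (max E 0 / (exp l)\<^sup>2)) \<partial>lborel)
      \<le> (\<integral>\<^sup>+a\<in>{0<..}. ennreal (sqrt (1 + L / s\<^sup>2 + a\<^sup>2) * Phi (exp (pos_extend mu s) * sqrt (1 + L / s\<^sup>2 + a\<^sup>2), L)) \<partial>lborel)"
    by (intro nn_integral_relativistic_energy_le[where f="\<lambda>E. Phi (E, L)"]) (auto simp: Phi_nonneg)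
  moreover have "\<bar>sqrt (1 + (a\<^sup>2 + L / s\<^sup>2))\<bar> = sqrt (1 + L / s\<^sup>2 + a\<^sup>2)" for a
    using L by (simp add: add_ac)
  ultimately show ?thesis
    by (simp add: rel_phase_density_def add_ac)
qed

lemma rel_escape:
  assumes "(mu \<longlongrightarrow> l) at_top" and "exp l < E"
  shows "\<forall>\<^sub>F s in at_top. exp (pos_extend mu s) * sqrt (1 + L / s\<^sup>2) < E"
proof -
  have "((\<lambda>s. exp (pos_extend mu s) * sqrt (1 + L / s\<^sup>2)) \<longlongrightarrow> exp l * sqrt (1 + 0)) at_top"
  proof (intro tendsto_mult tendsto_exp tendsto_real_sqrt tendsto_add tendsto_const tendsto_pos_extend assms(1))
    show "((\<lambda>s. L / s\<^sup>2) \<longlongrightarrow> 0) at_top"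
      by (intro tendsto_divide_0[OF tendsto_const] filterlim_at_top_imp_at_infinity
          filterlim_pow_at_top filterlim_ident) auto
  qed
  then show ?thesis
    using assms(2) by (intro order_tendstoD(2)) auto
qed

lemma rel_p_le_rel_rho:
  assumes Phi_nonneg: "\<And>z. Phi z \<ge> 0"
  shows "rel_p Phi mu x \<le> rel_rho Phi mu x"
  unfolding rel_p_def rel_rho_def
proof (intro nn_integral_mono ennreal_leI)
  fix v :: "real^3"
  let ?s = "sqrt (1 + (norm v)\<^sup>2)" and ?f = "rel_f Phi mu x v"
  have f_nonneg: "0 \<le> ?f"
    by (simp add: rel_f_def Phi_nonneg)
  have s_pos: "0 < ?s"
    by (simp add: add_pos_nonneg)
  have "((x \<bullet> v) / norm x)\<^sup>2 \<le> (norm v)\<^sup>2"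
  proof (cases "x = 0")
    case False
    have "\<bar>x \<bullet> v\<bar> / norm x \<le> norm v"
      using Cauchy_Schwarz_ineq2[of x v] False by (simp add: divide_le_eq mult.commute)
    then show ?thesis
      by (metis abs_divide abs_norm_cancel abs_ge_zero power2_abs power_mono)
  qed simp
  also have "\<dots> \<le> ?s\<^sup>2"
    by simp
  finally have "((x \<bullet> v) / norm x)\<^sup>2 * ?f / ?s \<le> ?s\<^sup>2 * ?f / ?s"
    using f_nonneg s_pos by (intro divide_right_mono mult_right_mono) auto
  also have "\<dots> = ?s * ?f"
  proof -
    have "t\<^sup>2 * f / t = t * f" if "0 < t" for t f :: real
      using that by (simp add: power2_eq_square)
    then show ?thesis
      using s_pos by blast
  qed
  finally show "((x \<bullet> v) / norm x)\<^sup>2 * ?f / ?s \<le> ?s * ?f" .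
qed

lemma relativistic_mu_tendsto:
  fixes Phi :: "real \<times> real \<Rightarrow> real" and lam mu lam' mu' :: "real \<Rightarrow> real"
  assumes Phi_nonneg: "\<And>z. Phi z \<ge> 0"
    and dlam: "\<forall>r>0. (lam has_real_derivative lam' r) (at r)"
    and dmu: "\<forall>r>0. (mu has_real_derivative mu' r) (at r)"
    and field_eqs: "\<forall>r>0. rel_rho Phi mu (radpt r) \<noteq> \<infinity> \<and> rel_p Phi mu (radpt r) \<noteq> \<infinity> \<and>
           exp (-2 * lam r) * (2 * r * lam' r - 1) + 1
             = 8 * pi * r^2 * enn2real (rel_rho Phi mu (radpt r)) \<and>
           exp (-2 * lam r) * (2 * r * mu' r + 1) - 1
             = 8 * pi * r^2 * enn2real (rel_p Phi mu (radpt r))"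
    and metric: "\<forall>r>0. (\<integral>\<^sup>+ s\<in>{0..r}. ennreal (s^2) * rel_rho Phi mu (radpt s) \<partial>lborel) \<noteq> \<infinity> \<and>
               exp (-2 * lam r) = 1 - 2 * (4 * pi *
                 enn2real (\<integral>\<^sup>+ s\<in>{0..r}. ennreal (s^2) * rel_rho Phi mu (radpt s) \<partial>lborel)) / r"
    and mass: "(\<integral>\<^sup>+s\<in>{0..}. ennreal (s\<^sup>2) * rel_rho Phi mu (radpt s) \<partial>lborel) < \<infinity>"
  shows "\<exists>l. (mu \<longlongrightarrow> l) at_top \<and> (\<forall>r\<ge>1. mu r \<le> l)"
proof -
  define M where "M = 4 * pi * enn2real (\<integral>\<^sup>+s\<in>{0..}. ennreal (s\<^sup>2) * rel_rho Phi mu (radpt s) \<partial>lborel)"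
  define m where "m r = 4 * pi * enn2real (\<integral>\<^sup>+ s\<in>{0..r}. ennreal (s^2) * rel_rho Phi mu (radpt s) \<partial>lborel)"
    for r
  have m_le: "m r \<le> M" for r
    using enn2real_set_nn_integral_mono[of "{0..r}" "{0..}"] mass by (simp add: m_def M_def)
  have p_le_rho: "enn2real (rel_p Phi mu (radpt r)) \<le> enn2real (rel_rho Phi mu (radpt r))" if "0 < r" for r
    using field_eqs that rel_p_le_rel_rho[of Phi mu, OF Phi_nonneg]
    by (intro enn2real_mono) (auto simp: top.not_eq_extremum)
  show ?thesis
    using field_equations_mu_tendsto[OF dlam dmu, of m M
        "\<lambda>r. enn2real (rel_rho Phi mu (radpt r))" "\<lambda>r. enn2real (rel_p Phi mu (radpt r))"]
      field_eqs metric m_le p_le_rho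
    by (auto simp: m_def)
qed

lemma relativistic_case:
  fixes Phi :: "real \<times> real \<Rightarrow> real" and lam mu lam' mu' :: "real \<Rightarrow> real"
  assumes Phi_meas[measurable]: "Phi \<in> borel_measurable borel" and Phi_nonneg: "\<And>z. Phi z \<ge> 0"
    and dlam: "\<forall>r>0. (lam has_real_derivative lam' r) (at r)"
    and dmu: "\<forall>r>0. (mu has_real_derivative mu' r) (at r)"
    and field_eqs: "\<forall>r>0. rel_rho Phi mu (radpt r) \<noteq> \<infinity> \<and> rel_p Phi mu (radpt r) \<noteq> \<infinity> \<and>
           exp (-2 * lam r) * (2 * r * lam' r - 1) + 1
             = 8 * pi * r^2 * enn2real (rel_rho Phi mu (radpt r)) \<and>
           exp (-2 * lam r) * (2 * r * mu' r + 1) - 1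
             = 8 * pi * r^2 * enn2real (rel_p Phi mu (radpt r))"
    and metric: "\<forall>r>0. (\<integral>\<^sup>+ s\<in>{0..r}. ennreal (s^2) * rel_rho Phi mu (radpt s) \<partial>lborel) \<noteq> \<infinity> \<and>
               exp (-2 * lam r) = 1 - 2 * (4 * pi *
                 enn2real (\<integral>\<^sup>+ s\<in>{0..r}. ennreal (s^2) * rel_rho Phi mu (radpt s) \<partial>lborel)) / r"
    and mass: "(\<integral>\<^sup>+ x. rel_rho Phi mu x \<partial>lborel) < \<infinity>"
  shows "\<exists>mu_inf. (mu \<longlongrightarrow> mu_inf) at_top \<and>
             (AE z in lborel. fst z > exp mu_inf \<and> snd z > 0 \<longrightarrow> Phi z = 0)"
proof -
  note [measurable] = borel_measurable_pos_extend[OF continuous_on_pos_if_deriv[OF dmu]]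
  note G_meas = rel_phase_density_measurable[OF Phi_meas continuous_on_pos_if_deriv[OF dmu]]
  note rho = rel_rho_eq_kinetic_density[of _ Phi mu]
  obtain l where l: "(mu \<longlongrightarrow> l) at_top" and mu_le: "\<And>r. 1 \<le> r \<Longrightarrow> mu r \<le> l"
    using relativistic_mu_tendsto[OF Phi_nonneg dlam dmu field_eqs metric kinetic_mass_finite[OF G_meas rho mass]]
    by blast
  have "AE z in lborel. exp l < fst z \<and> 0 < snd z \<longrightarrow> Phi z = 0"
  proof (rule AE_eq_0_if_mass_finite[OF G_meas _ Phi_meas Phi_nonneg _ _ _ _ rho mass])
    show "(\<lambda>(s, L). exp (pos_extend mu s) * sqrt (1 + L / s\<^sup>2)) \<in> borel_measurable borel"
      by (simp only: split_beta' borel_prod[symmetric]) measurable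
    show "(\<integral>\<^sup>+E\<in>{exp (pos_extend mu s) * sqrt (1 + L / s\<^sup>2)<..}. ennreal (Phi (E, L) * (max E 0 / (exp l)\<^sup>2)) \<partial>lborel)
        \<le> (\<integral>\<^sup>+a\<in>{0<..}. ennreal (rel_phase_density Phi mu s (a\<^sup>2 + L / s\<^sup>2) L) \<partial>lborel)"
      if "1 \<le> s" "0 < L" for s L
      using that mu_le[of s] by (intro rel_energy_le Phi_nonneg) auto
    show "0 < max E 0 / (exp l)\<^sup>2 \<and> (\<forall>\<^sub>F s in at_top. exp (pos_extend mu s) * sqrt (1 + L / s\<^sup>2) < E)"
      if "exp l < E" for E L
      using that exp_gt_zero[of l] rel_escape[OF l] by (simp add: max_def not_le less_trans[of 0 "exp l" E])
  qed (auto simp: rel_phase_density_def Phi_nonneg)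
  then show ?thesis
    using l by blast
qed

theorem theorem2p1:
  fixes Phi :: "real \<times> real \<Rightarrow> real"
  assumes Phi_meas: "Phi \<in> borel_measurable borel"
    and Phi_nonneg: "\<And>z. Phi z \<ge> 0"
  shows
    "(\<forall>U U'.
        (\<forall>r>0. (U has_real_derivative U' r) (at r)) \<and>
        continuous_on {0<..} U' \<and>
        (\<forall>r>0. (\<integral>\<^sup>+ s\<in>{0..r}. ennreal (s^2) * nr_rho Phi U (radpt s) \<partial>lborel) \<noteq> \<infinity> \<and>
               U' r = 4 * pi / r^2 *
                 enn2real (\<integral>\<^sup>+ s\<in>{0..r}. ennreal (s^2) * nr_rho Phi U (radpt s) \<partial>lborel)) \<and>
        (\<integral>\<^sup>+ x. nr_rho Phi U x \<partial>lborel) < \<infinity>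
      \<longrightarrow> (\<exists>U_inf. (U \<longlongrightarrow> U_inf) at_top \<and>
             (AE z in lborel. fst z > U_inf \<and> snd z > 0 \<longrightarrow> Phi z = 0)))
   \<and>
    (\<forall>lam mu lam' mu'.
        (\<forall>r>0. (lam has_real_derivative lam' r) (at r)) \<and>
        (\<forall>r>0. (mu has_real_derivative mu' r) (at r)) \<and>
        continuous_on {0<..} lam' \<and> continuous_on {0<..} mu' \<and>
        (\<forall>r>0. rel_rho Phi mu (radpt r) \<noteq> \<infinity> \<and> rel_p Phi mu (radpt r) \<noteq> \<infinity> \<and>
           exp (-2 * lam r) * (2 * r * lam' r - 1) + 1
             = 8 * pi * r^2 * enn2real (rel_rho Phi mu (radpt r)) \<and>
           exp (-2 * lam r) * (2 * r * mu' r + 1) - 1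
             = 8 * pi * r^2 * enn2real (rel_p Phi mu (radpt r))) \<and>
        (\<forall>r>0. (\<integral>\<^sup>+ s\<in>{0..r}. ennreal (s^2) * rel_rho Phi mu (radpt s) \<partial>lborel) \<noteq> \<infinity> \<and>
               exp (-2 * lam r) = 1 - 2 * (4 * pi *
                 enn2real (\<integral>\<^sup>+ s\<in>{0..r}. ennreal (s^2) * rel_rho Phi mu (radpt s) \<partial>lborel)) / r) \<and>
        (\<integral>\<^sup>+ x. rel_rho Phi mu x \<partial>lborel) < \<infinity>
      \<longrightarrow> (\<exists>mu_inf. (mu \<longlongrightarrow> mu_inf) at_top \<and>
             (AE z in lborel. fst z > exp mu_inf \<and> snd z > 0 \<longrightarrow> Phi z = 0)))"
  by (intro conjI allI impI; elim conjE;
      rule nonrelativistic_case[OF Phi_meas Phi_nonneg] relativistic_case[OF Phi_meas Phi_nonneg])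

end
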